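(* Assume (A1) and (A2), and let $\sigma,\sigma'>0$, $\bar Z\in\mathcal{Z}^\sigma_\star$, with $\bar Z'$ and $\bar H'$ as defined in the context. If $\bar H\in\mathcal{C}(\bar Z)\setminus\mathcal{T}_{\mathcal{Z}^\sigma_\star}(\bar Z)$, then $$\bar H'\in\mathcal{C}(\bar Z')\setminus\mathcal{T}_{\mathcal{Z}^{\sigma'}_\star}(\bar Z').$$
   Context: Notation: $\mathbb{S}^n$ is the space of real symmetric $n\times n$ matrices with $\langle A,B\rangle=\mathrm{tr}(AB)$. $\Pi_+$, $\Pi_-$ are the orthogonal projections onto the PSD and NSD cones, and $F'(Z;H):=\lim_{t\downarrow0}(F(Z+tH)-F(Z))/t$ for $F\in\{\Pi_+,\Pi_-\}$. SDP data $C,A_1,\dots,A_m\in\mathbb{S}^n$, $b\in\mathbb{R}^m$ define $\mathcal{A}X:=(\langle A_i,X\rangle)_i$ and $\mathcal{A}^*y:=\sum_iy_iA_i$. A KKT point is $(X,y,S)$ with $\mathcal{A}X=b$, $\mathcal{A}^*y+S=C$, $X,S\succeq0$, $\langle X,S\rangle=0$. $\mathcal{X}_\star$, $\mathcal{S}_\star$ are the sets of $X$, resp. $S$, in KKT points. (A1) $\mathcal{A}$ is surjective. (A2) Some KKT point $(X_{sc},y_{sc},S_{sc})$ has $\mathrm{rank}X_{sc}+\mathrm{rank}S_{sc}=n$. Let $\mathcal{P}:=\mathcal{A}^*(\mathcal{A}\mathcal{A}^* )^{-1}\mathcal{A}$ and $\mathcal{P}^\perp:=\mathrm{Id}-\mathcal{P}$.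 For $\tau>0$ let $\mathcal{Z}^\tau_\star:=\{X-\tau S:X\in\mathcal{X}_\star,S\in\mathcal{S}_\star\}$, a closed convex set, and let $\mathcal{T}_{\mathcal{Z}^\tau_\star}(\cdot)$ be its tangent cone. For such $\bar Z$ let $\delta'(\bar Z;H):=-\mathcal{P}\Pi_+'(\bar Z;H)-\mathcal{P}^\perp\Pi_-'(\bar Z;H)$ and $\mathcal{C}(\bar Z):=\{H:\delta'(\bar Z;H)=0\}$. Given $\bar Z\in\mathcal{Z}^\sigma_\star$, let $\bar X:=\Pi_+(\bar Z)$ and $\bar S:=-\sigma^{-1}\Pi_-(\bar Z)$, and define $$\bar Z':=\bar X-\sigma'\bar S\in\mathcal{Z}^{\sigma'}_\star,\qquad \bar H':=\Pi_+'(\bar Z;\bar H)+\frac{\sigma'}{\sigma}\Pi_-'(\bar Z;\bar H).$$ *)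

theory Defs
  imports "HOL-Analysis.Analysis"
begin

text \<open>Real symmetric n x n matrices are modelled as elements of real^'n^'n
  satisfying transpose X = X; n = CARD('n).\<close>

definition symm :: "(real^'n^'n) set" where
  "symm = {X. transpose X = X}"

definition sinner :: "real^'n^'n \<Rightarrow> real^'n^'n \<Rightarrow> real" where
  "sinner A B = trace (A ** B)"

definition psd_cone :: "(real^'n^'n) set" where
  "psd_cone = {X \<in> symm. \<forall>v. 0 \<le> v \<bullet> (X *v v)}"

definition nsd_cone :: "(real^'n^'n) set" where
  "nsd_cone = {X \<in> symm. \<forall>v. v \<bullet> (X *v v) \<le> 0}"

definition proj_plus :: "real^'n^'n \<Rightarrow> real^'n^'n" where
  "proj_plus Z = closest_point psd_cone Z"

definition proj_minus :: "real^'n^'n \<Rightarrow> real^'n^'n" where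
  "proj_minus Z = closest_point nsd_cone Z"

definition dir_deriv :: "(real^'n^'n \<Rightarrow> real^'n^'n) \<Rightarrow> real^'n^'n \<Rightarrow> real^'n^'n \<Rightarrow> real^'n^'n" where
  "dir_deriv F Z H = Lim (at_right (0::real)) (\<lambda>t. (F (Z + t *\<^sub>R H) - F Z) /\<^sub>R t)"

definition Aop :: "('m::finite \<Rightarrow> real^'n^'n) \<Rightarrow> real^'n^'n \<Rightarrow> real^'m" where
  "Aop As X = (\<chi> i. sinner (As i) X)"

definition Aadj :: "('m::finite \<Rightarrow> real^'n^'n) \<Rightarrow> real^'m \<Rightarrow> real^'n^'n" where
  "Aadj As y = (\<Sum>i\<in>UNIV. (y $ i) *\<^sub>R As i)"

definition AAadj :: "('m::finite \<Rightarrow> real^'n^'n) \<Rightarrow> real^'m^'m" where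
  "AAadj As = (\<chi> i j. sinner (As i) (As j))"

definition Pop :: "('m::finite \<Rightarrow> real^'n^'n) \<Rightarrow> real^'n^'n \<Rightarrow> real^'n^'n" where
  "Pop As X = Aadj As (matrix_inv (AAadj As) *v Aop As X)"

definition Pperp :: "('m::finite \<Rightarrow> real^'n^'n) \<Rightarrow> real^'n^'n \<Rightarrow> real^'n^'n" where
  "Pperp As X = X - Pop As X"

definition KKT :: "('m::finite \<Rightarrow> real^'n^'n) \<Rightarrow> real^'m \<Rightarrow> real^'n^'n
    \<Rightarrow> real^'n^'n \<Rightarrow> real^'m \<Rightarrow> real^'n^'n \<Rightarrow> bool" where
  "KKT As b C X y S \<longleftrightarrow> X \<in> symm \<and> S \<in> symm \<and> Aop As X = b \<and> Aadj As y + S = C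
     \<and> X \<in> psd_cone \<and> S \<in> psd_cone \<and> sinner X S = 0"

definition Xstar :: "('m::finite \<Rightarrow> real^'n^'n) \<Rightarrow> real^'m \<Rightarrow> real^'n^'n \<Rightarrow> (real^'n^'n) set" where
  "Xstar As b C = {X. \<exists>y S. KKT As b C X y S}"

definition Sstar :: "('m::finite \<Rightarrow> real^'n^'n) \<Rightarrow> real^'m \<Rightarrow> real^'n^'n \<Rightarrow> (real^'n^'n) set" where
  "Sstar As b C = {S. \<exists>X y. KKT As b C X y S}"

definition Zstar :: "('m::finite \<Rightarrow> real^'n^'n) \<Rightarrow> real^'m \<Rightarrow> real^'n^'n \<Rightarrow> real \<Rightarrow> (real^'n^'n) set" where
  "Zstar As b C \<tau> = {X - \<tau> *\<^sub>R S | X S. X \<in> Xstar As b C \<and> S \<in> Sstar As b C}"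

definition tangent_cone :: "'a::real_normed_vector set \<Rightarrow> 'a \<Rightarrow> 'a set" where
  "tangent_cone K z = closure {t *\<^sub>R (k - z) | t k. 0 \<le> t \<and> k \<in> K}"

definition delta' :: "('m::finite \<Rightarrow> real^'n^'n) \<Rightarrow> real^'n^'n \<Rightarrow> real^'n^'n \<Rightarrow> real^'n^'n" where
  "delta' As Z H = - Pop As (dir_deriv proj_plus Z H) - Pperp As (dir_deriv proj_minus Z H)"

definition crit_cone :: "('m::finite \<Rightarrow> real^'n^'n) \<Rightarrow> real^'n^'n \<Rightarrow> (real^'n^'n) set" where
  "crit_cone As Z = {H \<in> symm. delta' As Z H = 0}"

end

theory Submission
  imports Defs
begin

text \<open>
  For \<open>r > 0\<close> let \<open>\<Phi>\<^sub>r W = \<Pi>\<^sub>+ W + r \<Pi>\<^sub>- W\<close>. On symmetric matrices it keeps the positive part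
  and rescales the negative part, so \<open>\<Pi>\<^sub>+ \<circ> \<Phi>\<^sub>r = \<Pi>\<^sub>+\<close> and \<open>\<Pi>\<^sub>- \<circ> \<Phi>\<^sub>r = r \<Pi>\<^sub>-\<close>. Every
  \<open>X \<in> \<X>\<^sub>\<star>\<close> is complementary to every \<open>S \<in> \<S>\<^sub>\<star>\<close>, hence \<open>\<Pi>\<^sub>+(X - \<tau> S) = X\<close> and
  \<open>\<Pi>\<^sub>-(X - \<tau> S) = -\<tau> S\<close>; so for \<open>r = \<sigma>'/\<sigma>\<close> the Lipschitz map \<open>\<Phi>\<^sub>r\<close> sends the convex set
  \<open>\<Z>\<^sup>\<sigma>\<^sub>\<star>\<close> into \<open>\<Z>\<^sup>\<sigma>'\<^sub>\<star>\<close> and \<open>Zb\<close> to \<open>Zb'\<close>, and \<open>\<Phi>\<^bsub>1/r\<^esub>\<close> goes back.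

  Directional derivatives compose when the outer map is Lipschitz, so the derivatives of
  \<open>\<Pi>\<^sub>+, \<Pi>\<^sub>-\<close> at \<open>Zb'\<close> along \<open>Hb' = \<Phi>\<^sub>r'(Zb; Hb)\<close> are \<open>\<Pi>\<^sub>+'(Zb; Hb)\<close> and \<open>r \<Pi>\<^sub>-'(Zb; Hb)\<close>.
  The critical equation \<open>\<P> \<Pi>\<^sub>+' + \<P>\<^sup>\<bottom> \<Pi>\<^sub>-' = 0\<close> splits into its \<open>\<P>\<close> and \<open>\<P>\<^sup>\<bottom>\<close> parts
  and therefore survives the rescaling. A Lipschitz map sending a convex set into another maps
  tangent directions to tangent directions, so if \<open>Hb'\<close> were tangent to \<open>\<Z>\<^sup>\<sigma>'\<^sub>\<star>\<close> at \<open>Zb'\<close>,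
  then \<open>Hb = \<Phi>\<^bsub>1/r\<^esub>'(Zb'; Hb')\<close> would be tangent to \<open>\<Z>\<^sup>\<sigma>\<^sub>\<star>\<close> at \<open>Zb\<close>.

  The analytic input is that \<open>\<Pi>\<^sub>+\<close> is directionally differentiable at symmetric matrices: its
  difference quotients are bounded, and all their cluster points solve one system of conditions,
  derived from \<open>\<Pi>\<^sub>+ \<Pi>\<^sub>- = 0\<close> and the semidefiniteness of \<open>\<Pi>\<^sub>+, \<Pi>\<^sub>-\<close>, which has only one solution.
\<close>

section \<open>Symmetric matrices and the semidefinite cones\<close>

lemma bounded_bilinear_matrix_mult:
  "bounded_bilinear ((**) :: real^'n^'m \<Rightarrow> real^'p^'n \<Rightarrow> real^'p^'m)"
  unfolding bilinear_conv_bounded_bilinear[symmetric] bilinear_def linear_iff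
  by (auto simp: matrix_matrix_mult_def vec_eq_iff sum.distrib sum_distrib_left algebra_simps)

interpretation matrix_mult: bounded_bilinear "(**) :: real^'n^'m \<Rightarrow> real^'p^'n \<Rightarrow> real^'p^'m"
  by (rule bounded_bilinear_matrix_mult)

lemma matrix_mult_expand:
  "(A + t *\<^sub>R B) ** (C + t *\<^sub>R E) = A ** C + t *\<^sub>R (A ** E + B ** C + t *\<^sub>R (B ** (E::real^'n^'n)))"
  by (simp add: matrix_mult.add_left matrix_mult.add_right matrix_mult.scaleR_left
      matrix_mult.scaleR_right algebra_simps)

lemma trace_scaleR: "trace (c *\<^sub>R A) = c * trace (A::real^'n^'n)"
  by (simp add: trace_def sum_distrib_left)

lemma trace_uminus: "trace (- A) = - trace (A::real^'n^'n)"
  by (simp add: trace_def sum_negf)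

lemma trace_sum: "finite I \<Longrightarrow> trace (sum f I :: real^'n^'n) = (\<Sum>k\<in>I. trace (f k))"
  by (induction I rule: finite_induct) (auto simp: trace_add trace_0[simplified])

lemma matrix_vector_mult_uminus_left: "(- A) *v v = - (A *v (v::real^'n))"
  by (simp add: matrix_vector_mult_def vec_eq_iff sum_negf)

lemma sum_matrix_vector_mult: "finite I \<Longrightarrow> sum f I *v (v::real^'n) = (\<Sum>k\<in>I. f k *v v)"
  by (induction I rule: finite_induct) (auto simp: matrix_vector_mult_add_rdistrib)

lemma transpose_mult_self_eq_0: "transpose A ** A = 0 \<Longrightarrow> (A::real^'n^'n) = 0"
proof -
  assume "transpose A ** A = 0"
  moreover have "trace (transpose A ** A) = A \<bullet> A"
    by (simp add: trace_def matrix_matrix_mult_def transpose_def inner_vec_def)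
      (rule sum.swap)
  ultimately show "A = 0" by (simp add: trace_0[simplified])
qed

lemma transpose_add: "transpose (A + B) = transpose A + transpose (B::real^'n^'m)"
  by (simp add: transpose_def vec_eq_iff)

lemma transpose_0: "transpose (0::real^'n^'m) = 0"
  by (simp add: transpose_def vec_eq_iff)

lemma symm_iff: "X \<in> symm \<longleftrightarrow> (\<forall>i j. X $ j $ i = X $ i $ j)"
  by (auto simp: symm_def transpose_def vec_eq_iff)

lemma symm_transpose: "X \<in> symm \<Longrightarrow> transpose X = X"
  by (simp add: symm_def)

lemma subspace_symm: "subspace symm"
  by (auto simp: subspace_def symm_iff)

lemmas symm_0 = subspace_0[OF subspace_symm]
  and symm_add = subspace_add[OF subspace_symm]
  and symm_diff = subspace_diff[OF subspace_symm]
  and symm_uminus = subspace_neg[OF subspace_symm]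
  and symm_scaleR = subspace_scale[OF subspace_symm]
  and symm_sum = subspace_sum[OF subspace_symm]

lemma closed_symm: "closed (symm :: (real^'n^'n) set)"
proof -
  have "symm = (\<Inter>i. \<Inter>j. {X::real^'n^'n. X $ j $ i = X $ i $ j})"
    by (auto simp: symm_iff)
  moreover have "closed (\<Inter>i. \<Inter>j. {X::real^'n^'n. X $ j $ i = X $ i $ j})"
    by (intro closed_INT ballI closed_Collect_eq continuous_intros)
  ultimately show ?thesis by simp
qed

lemma inner_eq_trace: "Y \<in> symm \<Longrightarrow> X \<bullet> Y = trace (X ** (Y::real^'n^'n))"
  by (simp add: inner_vec_def trace_def matrix_matrix_mult_def symm_iff)

lemma transpose_mult_symm: "A \<in> symm \<Longrightarrow> B \<in> symm \<Longrightarrow> transpose (A ** B) = B ** (A::real^'n^'n)"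
  by (simp add: matrix_transpose_mul symm_transpose)

lemma mult_symm_eq_0_commute: "A \<in> symm \<Longrightarrow> B \<in> symm \<Longrightarrow> A ** B = 0 \<Longrightarrow> B ** (A::real^'n^'n) = 0"
  by (metis transpose_mult_symm transpose_0)

lemma symm_inner_mult: "X \<in> symm \<Longrightarrow> (X *v u) \<bullet> v = u \<bullet> (X *v (v::real^'n))"
  by (metis dot_lmul_matrix symm_transpose transpose_matrix_vector)

lemma symm_mult_sandwich: "Q \<in> symm \<Longrightarrow> A \<in> symm \<Longrightarrow> Q ** A ** Q \<in> symm"
  by (simp add: symm_def matrix_transpose_mul matrix_mul_assoc)

lemma psd_cone_symm: "X \<in> psd_cone \<Longrightarrow> X \<in> symm"
  by (simp add: psd_cone_def)

lemma psd_cone_quadratic: "X \<in> psd_cone \<Longrightarrow> 0 \<le> v \<bullet> (X *v v)"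
  by (simp add: psd_cone_def)

lemma nsd_cone_symm: "X \<in> nsd_cone \<Longrightarrow> X \<in> symm"
  by (simp add: nsd_cone_def)

lemma nsd_cone_quadratic: "X \<in> nsd_cone \<Longrightarrow> v \<bullet> (X *v v) \<le> 0"
  by (simp add: nsd_cone_def)

lemma nsd_cone_iff_uminus: "X \<in> nsd_cone \<longleftrightarrow> - X \<in> psd_cone"
  by (auto simp: nsd_cone_def psd_cone_def matrix_vector_mult_uminus_left
      dest: symm_uminus[of "- X"] intro: symm_uminus)

lemma nsd_cone_eq: "nsd_cone = uminus ` psd_cone"
  by (force simp: nsd_cone_iff_uminus image_iff)

lemma psd_cone_0: "0 \<in> psd_cone"
  by (simp add: psd_cone_def symm_0)

lemma psd_cone_add: "A \<in> psd_cone \<Longrightarrow> B \<in> psd_cone \<Longrightarrow> A + B \<in> psd_cone"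
  by (auto simp: psd_cone_def symm_add matrix_vector_mult_add_rdistrib inner_add_right)

lemma psd_cone_scaleR: "A \<in> psd_cone \<Longrightarrow> 0 \<le> c \<Longrightarrow> c *\<^sub>R A \<in> psd_cone"
  by (auto simp: psd_cone_def symm_scaleR scaleR_matrix_vector_assoc[symmetric])

lemma nsd_cone_0: "0 \<in> nsd_cone"
  using psd_cone_0 by (simp add: nsd_cone_iff_uminus)

lemma nsd_cone_scaleR: "A \<in> nsd_cone \<Longrightarrow> 0 \<le> c \<Longrightarrow> c *\<^sub>R A \<in> nsd_cone"
  using psd_cone_scaleR[of "- A" c] by (simp add: nsd_cone_iff_uminus)

lemma convex_psd_cone: "convex (psd_cone :: (real^'n^'n) set)"
  unfolding convex_def by (auto intro!: psd_cone_add psd_cone_scaleR)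

lemma convex_nsd_cone: "convex (nsd_cone :: (real^'n^'n) set)"
  unfolding nsd_cone_eq by (rule convex_negations[OF convex_psd_cone])

lemma inner_matrix_vector_mult_self:
  "v \<bullet> (X *v v) = (\<Sum>i\<in>UNIV. \<Sum>j\<in>UNIV. v$i * X$i$j * v$j)"
  by (simp add: inner_vec_def matrix_vector_mult_def sum_distrib_left mult.assoc)

lemma closed_psd_cone: "closed (psd_cone :: (real^'n^'n) set)"
proof -
  have psd_eq: "psd_cone = symm \<inter> (\<Inter>v. {X::real^'n^'n. 0 \<le> (\<Sum>i\<in>UNIV. \<Sum>j\<in>UNIV. v$i * X$i$j * v$j)})"
    by (auto simp: psd_cone_def inner_matrix_vector_mult_self)
  have "closed (\<Inter>v. {X::real^'n^'n. 0 \<le> (\<Sum>i\<in>UNIV. \<Sum>j\<in>UNIV. v$i * X$i$j * v$j)})"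
    by (intro closed_INT ballI closed_Collect_le continuous_intros)
  then show ?thesis unfolding psd_eq by (rule closed_Int[OF closed_symm])
qed

lemma closed_nsd_cone: "closed (nsd_cone :: (real^'n^'n) set)"
  unfolding nsd_cone_eq by (rule closed_negations[OF closed_psd_cone])

lemma quadratic_nonneg_imp_discriminant:
  fixes a b c :: real
  assumes c: "0 \<le> c" and nonneg: "\<And>s. 0 \<le> a + 2 * s * b + s\<^sup>2 * c"
  shows "b\<^sup>2 \<le> a * c"
proof (cases "c = 0")
  case True
  show ?thesis
  proof (cases "b = 0")
    case True
    then show ?thesis using nonneg[of 0] c by simp
  next
    case False
    have "0 \<le> a + 2 * (- (a + 1) / (2 * b)) * b" using nonneg[of "- (a + 1) / (2 * b)"] \<open>c = 0\<close> by simp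
    also have "\<dots> = -1" using False by (simp add: field_simps)
    finally show ?thesis by simp
  qed
next
  case False
  then have "c > 0" using c by simp
  have "0 \<le> a + 2 * (- b / c) * b + (- b / c)\<^sup>2 * c" by (rule nonneg)
  also have "\<dots> = (a * c - b\<^sup>2) / c" using \<open>c > 0\<close> by (simp add: field_simps power2_eq_square)
  finally show ?thesis using \<open>c > 0\<close> by (simp add: le_divide_eq)
qed

lemma psd_cone_cauchy_schwarz:
  assumes X: "X \<in> psd_cone"
  shows "(u \<bullet> (X *v v))\<^sup>2 \<le> (u \<bullet> (X *v u)) * (v \<bullet> (X *v v))"
proof (rule quadratic_nonneg_imp_discriminant)
  show "0 \<le> v \<bullet> (X *v v)" using X by (rule psd_cone_quadratic)
  fix s
  have "(u + s *\<^sub>R v) \<bullet> (X *v (u + s *\<^sub>R v))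
      = u \<bullet> (X *v u) + 2 * s * (u \<bullet> (X *v v)) + s\<^sup>2 * (v \<bullet> (X *v v))"
    using symm_inner_mult[OF psd_cone_symm[OF X], of v u]
    by (simp add: power2_eq_square algebra_simps inner_commute)
  then show "0 \<le> u \<bullet> (X *v u) + 2 * s * (u \<bullet> (X *v v)) + s\<^sup>2 * (v \<bullet> (X *v v))"
    using psd_cone_quadratic[OF X, of "u + s *\<^sub>R v"] by simp
qed

lemma psd_cone_quadratic_eq_0:
  assumes "X \<in> psd_cone" "v \<bullet> (X *v v) = 0"
  shows "X *v v = 0"
proof -
  have "((X *v v) \<bullet> (X *v v))\<^sup>2 \<le> 0"
    using psd_cone_cauchy_schwarz[OF assms(1), of "X *v v" v] assms(2) by simp
  then show ?thesis by simp
qed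

definition outer_prod :: "real^'n \<Rightarrow> real^'n^'n" where
  "outer_prod w = (\<chi> i j. w$i * w$j)"

lemma outer_prod_mult_vec: "outer_prod w *v v = (w \<bullet> v) *\<^sub>R w"
  by (simp add: outer_prod_def matrix_vector_mult_def vec_eq_iff inner_vec_def sum_distrib_left
      algebra_simps)

lemma outer_prod_symm: "outer_prod w \<in> symm"
  by (simp add: symm_iff outer_prod_def)

lemma outer_prod_psd: "outer_prod w \<in> psd_cone"
  by (simp add: psd_cone_def outer_prod_symm outer_prod_mult_vec inner_commute)

lemma outer_prod_0: "outer_prod 0 = 0"
  by (simp add: outer_prod_def vec_eq_iff)

lemma outer_prod_scaleR: "outer_prod (c *\<^sub>R w) = (c * c) *\<^sub>R outer_prod w"
  by (simp add: outer_prod_def vec_eq_iff)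

lemma inner_outer_prod: "X \<bullet> outer_prod v = v \<bullet> (X *v v)"
  unfolding inner_matrix_vector_mult_self by (simp add: inner_vec_def outer_prod_def mult_ac)

lemma trace_outer_prod_mult: "trace (outer_prod w ** Y) = w \<bullet> (Y *v w)"
proof -
  have "trace (outer_prod w ** Y) = trace (Y ** outer_prod w)" by (rule trace_mul_sym)
  also have "\<dots> = Y \<bullet> outer_prod w" by (rule inner_eq_trace[OF outer_prod_symm, symmetric])
  finally show ?thesis by (simp add: inner_outer_prod)
qed

lemma mult_outer_prod_eq_0:
  assumes "Y *v w = 0"
  shows "Y ** outer_prod w = 0"
proof -
  have "Y ** outer_prod w = (\<chi> i j. (Y *v w) $ i * w $ j)"
    by (simp add: matrix_matrix_mult_def outer_prod_def matrix_vector_mult_def vec_eq_iff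
        sum_distrib_right mult.assoc)
  then show ?thesis using assms by (simp add: vec_eq_iff)
qed

lemma psd_cone_diag_eq_0:
  assumes X: "X \<in> psd_cone" and Xaa: "X$a$a = 0"
  shows "X$i$a = 0" "X$a$i = 0"
proof -
  have "(axis a 1) \<bullet> (X *v axis a 1) = 0"
    using Xaa by (simp add: matrix_vector_mult_basis inner_axis' column_def)
  then have "X *v axis a 1 = 0" by (rule psd_cone_quadratic_eq_0[OF X])
  then show "X$i$a = 0" by (simp add: matrix_vector_mult_basis column_def vec_eq_iff)
  then show "X$a$i = 0" using psd_cone_symm[OF X] by (simp add: symm_iff)
qed

text \<open>One step of symmetric Gaussian elimination: the Schur complement of a positive diagonal
  entry is again PSD.\<close>

lemma psd_cone_eliminate:
  assumes X: "X \<in> psd_cone" and Xaa: "0 < X$a$a"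
  defines "X' \<equiv> X - (1 / X$a$a) *\<^sub>R outer_prod (X *v axis a 1)"
  shows "X' \<in> psd_cone" "X'$i$j = X$i$j - X$i$a * X$j$a / X$a$a"
proof -
  define c p where "c = X$a$a" and "p = X *v axis a 1"
  have X': "X' = X - (1/c) *\<^sub>R outer_prod p" by (simp add: X'_def c_def p_def)
  have p: "p$i = X$i$a" for i by (simp add: p_def matrix_vector_mult_basis column_def)
  show "X'$i$j = X$i$j - X$i$a * X$j$a / X$a$a"
    by (simp add: X' outer_prod_def p c_def)
  have c: "(axis a 1) \<bullet> (X *v axis a 1) = c"
    by (simp add: c_def matrix_vector_mult_basis inner_axis' column_def)
  have "0 \<le> v \<bullet> (X' *v v)" for v
  proof -
    have "v \<bullet> (X' *v v) = v \<bullet> (X *v v) - (1/c) * (p \<bullet> v)\<^sup>2"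
      by (simp add: X' matrix_vector_mult_diff_rdistrib outer_prod_mult_vec inner_diff_right
          scaleR_matrix_vector_assoc[symmetric] power2_eq_square inner_commute)
    moreover have "(p \<bullet> v)\<^sup>2 \<le> (v \<bullet> (X *v v)) * c"
      using psd_cone_cauchy_schwarz[OF X, of v "axis a 1"] c by (simp add: p_def inner_commute)
    ultimately have "0 \<le> c * (v \<bullet> (X' *v v))" using Xaa by (simp add: c_def field_simps)
    then show ?thesis using Xaa by (simp add: c_def zero_le_mult_iff)
  qed
  moreover have "X' \<in> symm"
    unfolding X' by (intro symm_diff symm_scaleR outer_prod_symm psd_cone_symm[OF X])
  ultimately show "X' \<in> psd_cone" by (simp add: psd_cone_def)
qed

lemma psd_cone_sum_outer_prod_rows:
  fixes X :: "real^'n^'n"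
  assumes "finite I" and "X \<in> psd_cone" and "\<And>i j. i \<notin> I \<Longrightarrow> X$i$j = 0"
  shows "\<exists>w. X = (\<Sum>k\<in>I. outer_prod (w k))"
  using assms
proof (induction I arbitrary: X rule: finite_induct)
  case empty
  then show ?case by (auto simp: vec_eq_iff)
next
  case (insert a I)
  note X = insert.prems(1) and rows = insert.prems(2)
  have "0 \<le> X$a$a"
    using psd_cone_quadratic[OF X, of "axis a 1"] by (simp add: matrix_vector_mult_basis inner_axis' column_def)
  then consider "X$a$a = 0" | "0 < X$a$a" by linarith
  then show ?case
  proof cases
    case 1
    have "X$i$j = 0" if "i \<notin> I" for i j
    proof (cases "i = a")
      case True
      then show ?thesis using psd_cone_diag_eq_0(2)[OF X 1] by simp
    next
      case False
      then show ?thesis using rows that by simp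
    qed
    then obtain w where w: "X = (\<Sum>k\<in>I. outer_prod (w k))" using insert.IH[OF X] by blast
    have "(\<Sum>k\<in>I. outer_prod ((w(a := 0)) k)) = (\<Sum>k\<in>I. outer_prod (w k))"
      using insert.hyps by (intro sum.cong) auto
    then have "X = (\<Sum>k\<in>insert a I. outer_prod ((w(a := 0)) k))"
      using insert.hyps w by (simp add: outer_prod_0)
    then show ?thesis by blast
  next
    case 2
    define c p X' where "c = X$a$a" and "p = X *v axis a 1" and "X' = X - (1/c) *\<^sub>R outer_prod p"
    have X': "X' \<in> psd_cone" and X'_entry: "X'$i$j = X$i$j - X$i$a * X$j$a / c" for i j
      using psd_cone_eliminate[OF X 2] by (simp_all add: X'_def c_def p_def)
    have "X'$i$j = 0" if "i \<notin> I" for i j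
    proof (cases "i = a")
      case True
      have "X$j$a = X$a$j" using psd_cone_symm[OF X] by (simp add: symm_iff)
      then show ?thesis using True 2 by (simp add: X'_entry c_def)
    next
      case False
      then show ?thesis using rows[of i j] rows[of i a] that by (simp add: X'_entry)
    qed
    then obtain w where w: "X' = (\<Sum>k\<in>I. outer_prod (w k))" using insert.IH[OF X'] by blast
    have "outer_prod ((1 / sqrt c) *\<^sub>R p) = (1/c) *\<^sub>R outer_prod p"
      using 2 by (simp add: c_def outer_prod_scaleR real_sqrt_mult[symmetric])
    moreover have "(\<Sum>k\<in>I. outer_prod ((w(a := (1 / sqrt c) *\<^sub>R p)) k)) = X'"
      using insert.hyps w by (auto intro: sum.cong)
    ultimately have "X = (\<Sum>k\<in>insert a I. outer_prod ((w(a := (1 / sqrt c) *\<^sub>R p)) k))"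
      using insert.hyps by (simp add: X'_def)
    then show ?thesis by blast
  qed
qed

lemma psd_cone_sum_outer_prod:
  assumes "(X::real^'n^'n) \<in> psd_cone"
  obtains w :: "'n \<Rightarrow> real^'n" where "X = (\<Sum>k\<in>UNIV. outer_prod (w k))"
  using psd_cone_sum_outer_prod_rows[of UNIV X] assms by auto

lemma trace_mult_psd_cone_nonneg:
  assumes X: "X \<in> psd_cone" and Y: "Y \<in> psd_cone"
  shows "0 \<le> trace (X ** (Y::real^'n^'n))"
proof -
  obtain w :: "'n \<Rightarrow> real^'n" where w: "X = (\<Sum>k\<in>UNIV. outer_prod (w k))"
    using psd_cone_sum_outer_prod[OF X] .
  have "trace (X ** Y) = (\<Sum>k\<in>UNIV. w k \<bullet> (Y *v w k))"
    by (simp add: w matrix_mult.sum_left trace_sum trace_outer_prod_mult)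
  also have "\<dots> \<ge> 0" by (intro sum_nonneg psd_cone_quadratic[OF Y])
  finally show ?thesis .
qed

lemma trace_mult_psd_cone_eq_0:
  assumes X: "X \<in> psd_cone" and Y: "Y \<in> psd_cone" and tr: "trace (X ** Y) = 0"
  shows "Y ** X = 0" "X ** (Y::real^'n^'n) = 0"
proof -
  obtain w :: "'n \<Rightarrow> real^'n" where w: "X = (\<Sum>k\<in>UNIV. outer_prod (w k))"
    using psd_cone_sum_outer_prod[OF X] .
  have "trace (X ** Y) = (\<Sum>k\<in>UNIV. w k \<bullet> (Y *v w k))"
    by (simp add: w matrix_mult.sum_left trace_sum trace_outer_prod_mult)
  then have "w k \<bullet> (Y *v w k) = 0" for k
    using tr sum_nonneg_eq_0_iff[of UNIV "\<lambda>k. w k \<bullet> (Y *v w k)"] psd_cone_quadratic[OF Y] by simp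
  then have "Y *v w k = 0" for k using psd_cone_quadratic_eq_0[OF Y] by blast
  then show YX: "Y ** X = 0" by (simp add: w matrix_mult.sum_right mult_outer_prod_eq_0)
  show "X ** Y = 0"
    by (rule mult_symm_eq_0_commute[OF psd_cone_symm[OF Y] psd_cone_symm[OF X] YX])
qed

lemma trace_mult_psd_nsd_nonpos:
  assumes "X \<in> psd_cone" "Y \<in> nsd_cone"
  shows "trace (X ** (Y::real^'n^'n)) \<le> 0"
  using trace_mult_psd_cone_nonneg[OF assms(1), of "- Y"] assms(2)
  by (simp add: nsd_cone_iff_uminus matrix_mult.minus_right trace_uminus)

lemma psd_nsd_intertwiner_eq_0:
  fixes P N E :: "real^'n^'n"
  assumes P: "P \<in> psd_cone" and N: "N \<in> nsd_cone" and E: "E \<in> symm"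
    and intertwine: "P ** E = E ** N"
  shows "E ** P = 0" "E ** N = 0"
proof -
  have EE: "E ** E \<in> psd_cone"
  proof -
    have "v \<bullet> ((E ** E) *v v) = (E *v v) \<bullet> (E *v v)" for v
      using symm_inner_mult[OF E, of v "E *v v"] by (simp add: matrix_vector_mul_assoc inner_commute)
    then show ?thesis
      using E by (simp add: psd_cone_def symm_def transpose_mult_symm)
  qed
  \<comment> \<open>\<open>tr(E\<^sup>2 P) = tr(E P E) = tr(E E N)\<close> is both \<open>\<ge> 0\<close> and \<open>\<le> 0\<close>\<close>
  have tr: "trace ((E ** E) ** P) = trace ((E ** E) ** N)"
    by (metis intertwine matrix_mul_assoc trace_mul_sym)
  have "trace ((E ** E) ** P) = 0"
    using tr trace_mult_psd_cone_nonneg[OF EE P] trace_mult_psd_nsd_nonpos[OF EE N] by linarith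
  then have "P ** (E ** E) = 0" by (rule trace_mult_psd_cone_eq_0(1)[OF EE P])
  then have "transpose (E ** P) ** (E ** P) = 0"
    using E psd_cone_symm[OF P] by (simp add: matrix_transpose_mul symm_transpose matrix_mul_assoc)
  then show "E ** P = 0" by (rule transpose_mult_self_eq_0)
  have mN: "- N \<in> psd_cone" using N by (simp add: nsd_cone_iff_uminus)
  have "trace ((E ** E) ** - N) = 0"
    using tr trace_mult_psd_cone_nonneg[OF EE P] trace_mult_psd_nsd_nonpos[OF EE N]
    by (simp add: matrix_mult.minus_right trace_uminus)
  then have "(- N) ** (E ** E) = 0" by (rule trace_mult_psd_cone_eq_0(1)[OF EE mN])
  then have "transpose (E ** N) ** (E ** N) = 0"
    using E nsd_cone_symm[OF N]
    by (simp add: matrix_transpose_mul symm_transpose matrix_mul_assoc matrix_mult.minus_left)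
  then show "E ** N = 0" by (rule transpose_mult_self_eq_0)
qed

section \<open>Projections onto the semidefinite cones\<close>

lemma proj_plus_psd: "proj_plus M \<in> psd_cone"
  unfolding proj_plus_def using psd_cone_0 by (auto intro: closest_point_in_set closed_psd_cone)

lemma proj_minus_nsd: "proj_minus M \<in> nsd_cone"
  unfolding proj_minus_def using nsd_cone_0 by (auto intro: closest_point_in_set closed_nsd_cone)

lemma lipschitz_proj_plus: "1-lipschitz_on UNIV proj_plus"
  unfolding proj_plus_def using psd_cone_0
  by (intro lipschitz_onI) (auto intro: closest_point_lipschitz convex_psd_cone closed_psd_cone)

lemma lipschitz_proj_minus: "1-lipschitz_on UNIV proj_minus"
  unfolding proj_minus_def using nsd_cone_0
  by (intro lipschitz_onI) (auto intro: closest_point_lipschitz convex_nsd_cone closed_nsd_cone)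

lemma closest_point_eqI:
  fixes a x :: "'a::{real_inner,heine_borel}"
  assumes "convex K" "closed K" "x \<in> K" and obtuse: "\<And>z. z \<in> K \<Longrightarrow> (a - x) \<bullet> (z - x) \<le> 0"
  shows "closest_point K a = x"
proof (rule closest_point_unique[OF assms(1-3), symmetric], intro ballI)
  fix z assume "z \<in> K"
  have "(dist a z)\<^sup>2 = (dist a x)\<^sup>2 - 2 * ((a - x) \<bullet> (z - x)) + (z - x) \<bullet> (z - x)"
    unfolding dist_norm power2_norm_eq_inner
    by (simp add: inner_diff_left inner_diff_right inner_commute)
  then have "(dist a x)\<^sup>2 \<le> (dist a z)\<^sup>2" using obtuse[OF \<open>z \<in> K\<close>] inner_ge_zero[of "z - x"] by linarith
  then show "dist a x \<le> dist a z" by (simp add: power2_le_iff_abs_le)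
qed

lemma proj_eqI:
  fixes P N :: "real^'n^'n"
  assumes P: "P \<in> psd_cone" and N: "N \<in> nsd_cone" and tr: "trace (P ** N) = 0"
  shows "proj_plus (P + N) = P" "proj_minus (P + N) = N"
proof -
  have "N \<bullet> P = trace (N ** P)" by (rule inner_eq_trace[OF psd_cone_symm[OF P]])
  also have "\<dots> = trace (P ** N)" by (rule trace_mul_sym)
  finally have NP: "N \<bullet> P = 0" using tr by simp
  then have PN: "P \<bullet> N = 0" by (simp add: inner_commute)
  show "proj_plus (P + N) = P"
    unfolding proj_plus_def
  proof (rule closest_point_eqI[OF convex_psd_cone closed_psd_cone P])
    fix z :: "real^'n^'n" assume z: "z \<in> psd_cone"
    have "(P + N - P) \<bullet> (z - P) = trace (N ** z)"
      using NP inner_eq_trace[OF psd_cone_symm[OF z], of N] by (simp add: inner_diff_right)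
    also have "\<dots> = trace (z ** N)" by (rule trace_mul_sym)
    also have "\<dots> \<le> 0" using z N by (rule trace_mult_psd_nsd_nonpos)
    finally show "(P + N - P) \<bullet> (z - P) \<le> 0" .
  qed
  show "proj_minus (P + N) = N"
    unfolding proj_minus_def
  proof (rule closest_point_eqI[OF convex_nsd_cone closed_nsd_cone N])
    fix z :: "real^'n^'n" assume z: "z \<in> nsd_cone"
    have "(P + N - N) \<bullet> (z - N) = trace (P ** z)"
      using PN inner_eq_trace[OF nsd_cone_symm[OF z], of P] by (simp add: inner_diff_right)
    also have "\<dots> \<le> 0" using P z by (rule trace_mult_psd_nsd_nonpos)
    finally show "(P + N - N) \<bullet> (z - N) \<le> 0" .
  qed
qed

lemma moreau_decomposition:
  fixes M :: "real^'n^'n"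
  assumes M: "M \<in> symm"
  shows "proj_plus M + proj_minus M = M" "trace (proj_plus M ** proj_minus M) = 0"
proof -
  define P where "P = proj_plus M"
  have P: "P \<in> psd_cone" by (simp add: P_def proj_plus_psd)
  have obtuse: "(M - P) \<bullet> (z - P) \<le> 0" if "z \<in> psd_cone" for z
    unfolding P_def proj_plus_def by (rule closest_point_dot[OF convex_psd_cone closed_psd_cone that])
  have "(M - P) \<bullet> (0 - P) \<le> 0" "(M - P) \<bullet> (2 *\<^sub>R P - P) \<le> 0"
    by (intro obtuse psd_cone_0 psd_cone_scaleR P; simp)+
  then have MP: "(M - P) \<bullet> P = 0"
    by (simp add: inner_diff_right scaleR_2 inner_add_right)
  have "v \<bullet> ((M - P) *v v) \<le> 0" for v
    using obtuse[OF psd_cone_add[OF outer_prod_psd P]] by (simp add: inner_outer_prod)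
  then have N: "M - P \<in> nsd_cone"
    using M P by (simp add: nsd_cone_def symm_diff psd_cone_symm)
  have tr: "trace (P ** (M - P)) = 0"
    using MP by (simp add: inner_eq_trace[OF nsd_cone_symm[OF N], symmetric] inner_commute)
  have "proj_minus M = M - P" using proj_eqI(2)[OF P N tr] by simp
  then show "proj_plus M + proj_minus M = M" "trace (proj_plus M ** proj_minus M) = 0"
    using tr by (simp_all add: P_def)
qed

lemma proj_plus_mult_proj_minus: "M \<in> symm \<Longrightarrow> proj_plus M ** proj_minus M = 0"
proof -
  assume M: "M \<in> symm"
  have "trace (proj_plus M ** - proj_minus M) = 0"
    using moreau_decomposition(2)[OF M] by (simp add: matrix_mult.minus_right trace_uminus)
  moreover have "- proj_minus M \<in> psd_cone" using proj_minus_nsd by (simp add: nsd_cone_iff_uminus)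
  ultimately have "proj_plus M ** - proj_minus M = 0"
    by (intro trace_mult_psd_cone_eq_0(2)[OF proj_plus_psd])
  then show ?thesis by (simp add: matrix_mult.minus_right)
qed

lemma proj_minus_eq: "M \<in> symm \<Longrightarrow> proj_minus M = M - proj_plus M"
  using moreau_decomposition(1)[of M] by (simp add: algebra_simps)

lemma proj_diff_scaleR:
  fixes X S :: "real^'n^'n"
  assumes X: "X \<in> psd_cone" and S: "S \<in> psd_cone" and tr: "trace (X ** S) = 0" and "0 \<le> \<tau>"
  shows "proj_plus (X - \<tau> *\<^sub>R S) = X" "proj_minus (X - \<tau> *\<^sub>R S) = - \<tau> *\<^sub>R S"
proof -
  have N: "- \<tau> *\<^sub>R S \<in> nsd_cone" using psd_cone_scaleR[OF S \<open>0 \<le> \<tau>\<close>] by (simp add: nsd_cone_iff_uminus)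
  have "trace (X ** (- \<tau> *\<^sub>R S)) = 0"
    using tr by (simp add: matrix_mult.minus_right matrix_mult.scaleR_right trace_uminus trace_scaleR)
  then show "proj_plus (X - \<tau> *\<^sub>R S) = X" "proj_minus (X - \<tau> *\<^sub>R S) = - \<tau> *\<^sub>R S"
    using proj_eqI[OF X N] by simp_all
qed

section \<open>One-sided directional derivatives\<close>

definition diff_quotient ::
    "('a::real_normed_vector \<Rightarrow> 'b::real_normed_vector) \<Rightarrow> 'a \<Rightarrow> 'a \<Rightarrow> real \<Rightarrow> 'b" where
  "diff_quotient F Z H t = (F (Z + t *\<^sub>R H) - F Z) /\<^sub>R t"

definition has_dir_deriv ::
    "('a::real_normed_vector \<Rightarrow> 'b::real_normed_vector) \<Rightarrow> 'a \<Rightarrow> 'a \<Rightarrow> 'b \<Rightarrow> bool" where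
  "has_dir_deriv F Z H D \<longleftrightarrow> (diff_quotient F Z H \<longlongrightarrow> D) (at_right 0)"

lemma dir_deriv_eqI: "has_dir_deriv F Z H D \<Longrightarrow> dir_deriv F Z H = D"
  unfolding has_dir_deriv_def dir_deriv_def diff_quotient_def[abs_def]
  by (rule tendsto_Lim[OF trivial_limit_at_right_real])

lemma diff_quotient_eq: "t \<noteq> 0 \<Longrightarrow> F (Z + t *\<^sub>R H) = F Z + t *\<^sub>R diff_quotient F Z H t"
  by (simp add: diff_quotient_def)

lemma has_dir_deriv_cong:
  assumes "\<And>t. 0 < t \<Longrightarrow> diff_quotient F Z H t = diff_quotient G Z' H' t"
  shows "has_dir_deriv F Z H D \<longleftrightarrow> has_dir_deriv G Z' H' D"
  unfolding has_dir_deriv_def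
  by (rule tendsto_cong) (use eventually_at_right_less[of 0] assms in \<open>auto elim: eventually_mono\<close>)

lemma has_dir_deriv_add:
  assumes "has_dir_deriv F Z H D" "has_dir_deriv G Z H E"
  shows "has_dir_deriv (\<lambda>x. F x + G x) Z H (D + E)"
proof -
  have "diff_quotient (\<lambda>x. F x + G x) Z H = (\<lambda>t. diff_quotient F Z H t + diff_quotient G Z H t)"
    by (simp add: fun_eq_iff diff_quotient_def algebra_simps)
  then show ?thesis using assms unfolding has_dir_deriv_def by (simp add: tendsto_add)
qed

lemma has_dir_deriv_scaleR:
  assumes "has_dir_deriv F Z H D"
  shows "has_dir_deriv (\<lambda>x. c *\<^sub>R F x) Z H (c *\<^sub>R D)"
proof -
  have "diff_quotient (\<lambda>x. c *\<^sub>R F x) Z H = (\<lambda>t. c *\<^sub>R diff_quotient F Z H t)"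
    by (simp add: fun_eq_iff diff_quotient_def algebra_simps)
  then show ?thesis using assms unfolding has_dir_deriv_def by (simp add: tendsto_scaleR)
qed

text \<open>For Lipschitz \<open>G\<close>, moving the base curve by \<open>o(t)\<close> does not change difference quotients
  in the limit, so \<open>G'(F Z; F'(Z;H))\<close> can be read off from \<open>G \<circ> F\<close>.\<close>

lemma has_dir_deriv_lipschitz_compose:
  assumes G: "c-lipschitz_on UNIV G" and F: "has_dir_deriv F Z H D"
    and GF: "has_dir_deriv (\<lambda>x. G (F x)) Z H E"
  shows "has_dir_deriv G (F Z) D E"
proof -
  have "((\<lambda>t. diff_quotient G (F Z) D t - diff_quotient (\<lambda>x. G (F x)) Z H t) \<longlongrightarrow> 0) (at_right 0)"
  proof (rule tendsto_0_le)
    show "((\<lambda>t. diff_quotient F Z H t - D) \<longlongrightarrow> 0) (at_right 0)"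
      using tendsto_diff[OF F[unfolded has_dir_deriv_def] tendsto_const[of D]] by simp
    show "\<forall>\<^sub>F t in at_right 0. norm (diff_quotient G (F Z) D t - diff_quotient (\<lambda>x. G (F x)) Z H t)
        \<le> norm (diff_quotient F Z H t - D) * c"
      using eventually_at_right_less[of 0]
    proof (rule eventually_mono)
      fix t :: real assume t: "0 < t"
      have "diff_quotient G (F Z) D t - diff_quotient (\<lambda>x. G (F x)) Z H t
          = (G (F Z + t *\<^sub>R D) - G (F (Z + t *\<^sub>R H))) /\<^sub>R t"
        by (simp add: diff_quotient_def algebra_simps)
      then have "norm (diff_quotient G (F Z) D t - diff_quotient (\<lambda>x. G (F x)) Z H t)
          = norm (G (F Z + t *\<^sub>R D) - G (F (Z + t *\<^sub>R H))) / t"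
        using t by (simp add: divide_inverse_commute)
      also have "\<dots> \<le> c * norm (F Z + t *\<^sub>R D - F (Z + t *\<^sub>R H)) / t"
        using lipschitz_on_normD[OF G] t by (simp add: divide_right_mono)
      also have "F Z + t *\<^sub>R D - F (Z + t *\<^sub>R H) = t *\<^sub>R (D - diff_quotient F Z H t)"
        using diff_quotient_eq[of t F Z H] t by (simp add: algebra_simps)
      finally show "norm (diff_quotient G (F Z) D t - diff_quotient (\<lambda>x. G (F x)) Z H t)
          \<le> norm (diff_quotient F Z H t - D) * c"
        using t by (simp add: norm_minus_commute mult.commute)
    qed
  qed
  from tendsto_add[OF this GF[unfolded has_dir_deriv_def]] show ?thesis
    by (simp add: has_dir_deriv_def)
qed

text \<open>A tangent direction \<open>\<tau> (k - z)\<close> is followed by the segment \<open>z + s \<tau> (k - z) \<in> K\<close>; its image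
  stays in \<open>L\<close> and, by the Lipschitz bound, has difference quotients close to those along \<open>H\<close>.\<close>

lemma tangent_cone_image:
  fixes f :: "'a::real_normed_vector \<Rightarrow> 'b::real_normed_vector"
  assumes K: "convex K" "z \<in> K" and fK: "f ` K \<subseteq> L" and f: "c-lipschitz_on UNIV f"
    and D: "has_dir_deriv f z H D" and H: "H \<in> tangent_cone K z"
  shows "D \<in> tangent_cone L (f z)"
  unfolding tangent_cone_def closure_approachable
proof (intro allI impI)
  fix e :: real assume e: "0 < e"
  have c: "0 \<le> c" using f by (rule lipschitz_on_nonneg)
  define \<delta> where "\<delta> = e / (2 * (c + 1))"
  have \<delta>: "0 < \<delta>" "c * \<delta> < e / 2"
    using e c by (auto simp: \<delta>_def field_simps)
  obtain y where "y \<in> {t *\<^sub>R (k - z) |t k. 0 \<le> t \<and> k \<in> K}" and y: "dist y H < \<delta>"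
    using H \<delta>(1) unfolding tangent_cone_def closure_approachable by blast
  then obtain \<tau> k where \<tau>: "0 \<le> \<tau>" and k: "k \<in> K" and y_eq: "y = \<tau> *\<^sub>R (k - z)" by blast
  have "\<forall>\<^sub>F s in at_right 0. dist (diff_quotient f z H s) D < e / 2 \<and> s * \<tau> < 1 \<and> 0 < s"
  proof (intro eventually_conj)
    show "\<forall>\<^sub>F s in at_right 0. dist (diff_quotient f z H s) D < e / 2"
      using tendstoD[OF D[unfolded has_dir_deriv_def], of "e / 2"] e by simp
    show "\<forall>\<^sub>F s in at_right 0. s * \<tau> < 1"
      using \<tau> by (intro eventually_at_rightI[of 0 "1 / (\<tau> + 1)"]) (auto simp: field_simps)
    show "\<forall>\<^sub>F s in at_right (0::real). 0 < s" by (rule eventually_at_right_less)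
  qed
  then obtain s where s: "dist (diff_quotient f z H s) D < e / 2" "s * \<tau> < 1" "0 < s"
    using eventually_happens trivial_limit_at_right_real by blast
  have "z + s *\<^sub>R y = (1 - s * \<tau>) *\<^sub>R z + (s * \<tau>) *\<^sub>R k"
    by (simp add: y_eq algebra_simps)
  also have "\<dots> \<in> K" using s \<tau> by (intro convexD_alt K k) auto
  finally have "f (z + s *\<^sub>R y) \<in> L" using fK by blast
  then have in_cone: "diff_quotient f z y s \<in> {t *\<^sub>R (l - f z) |t l. 0 \<le> t \<and> l \<in> L}"
    unfolding diff_quotient_def using s(3) by force
  have "diff_quotient f z y s - diff_quotient f z H s = (f (z + s *\<^sub>R y) - f (z + s *\<^sub>R H)) /\<^sub>R s"
    by (simp add: diff_quotient_def algebra_simps)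
  then have "dist (diff_quotient f z y s) (diff_quotient f z H s)
      = norm (f (z + s *\<^sub>R y) - f (z + s *\<^sub>R H)) / s"
    using s(3) by (simp add: dist_norm divide_inverse_commute)
  also have "\<dots> \<le> c * norm ((z + s *\<^sub>R y) - (z + s *\<^sub>R H)) / s"
    using s(3) by (intro divide_right_mono lipschitz_on_normD[OF f]) auto
  also have "\<dots> = c * dist y H"
    using s(3) by (simp add: dist_norm scaleR_diff_right[symmetric])
  also have "\<dots> \<le> c * \<delta>" using y c by (simp add: mult_left_mono)
  finally have "dist (diff_quotient f z y s) D < e"
    using s(1) \<delta>(2) dist_triangle[of "diff_quotient f z y s" D "diff_quotient f z H s"] by linarith
  then show "\<exists>w\<in>{t *\<^sub>R (l - f z) |t l. 0 \<le> t \<and> l \<in> L}. dist w D < e"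
    using in_cone by blast
qed

section \<open>Directional differentiability of the projection onto the PSD cone\<close>

lemma tendsto_at_right_0_unique_cluster:
  fixes f :: "real \<Rightarrow> 'a::heine_borel"
  assumes bounded: "bounded (f ` {0<..})"
    and cluster: "\<And>s L. (\<And>n. 0 < s n) \<Longrightarrow> s \<longlonglongrightarrow> 0 \<Longrightarrow> (\<lambda>n. f (s n)) \<longlonglongrightarrow> L \<Longrightarrow> P L"
    and unique: "\<And>L L'. P L \<Longrightarrow> P L' \<Longrightarrow> L = L'"
  obtains L where "(f \<longlongrightarrow> L) (at_right 0)"
proof -
  have convergent_subseq: "\<exists>L r. strict_mono r \<and> ((\<lambda>n. f (s n)) \<circ> r) \<longlonglongrightarrow> L \<and> P L"
    if s: "\<And>n. 0 < s n" "s \<longlonglongrightarrow> 0" for s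
  proof -
    have "range (\<lambda>n. f (s n)) \<subseteq> f ` {0<..}" using s(1) by auto
    then have "bounded (range (\<lambda>n. f (s n)))" by (rule bounded_subset[OF bounded])
    then obtain L r where r: "strict_mono r" and L: "((\<lambda>n. f (s n)) \<circ> r) \<longlonglongrightarrow> L"
      using bounded_imp_convergent_subsequence by blast
    have "P L"
      using cluster[of "s \<circ> r" L] s LIMSEQ_subseq_LIMSEQ[OF s(2) r] L by (simp add: o_def)
    then show ?thesis using r L by blast
  qed
  define s0 :: "nat \<Rightarrow> real" where "s0 n = inverse (real (Suc n))" for n
  have s0: "\<And>n. 0 < s0 n" "s0 \<longlonglongrightarrow> 0"
    unfolding s0_def by (simp, rule LIMSEQ_inverse_real_of_nat)
  obtain L0 where L0: "P L0" using convergent_subseq[of s0, OF s0] by blast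
  have "(f \<longlongrightarrow> L0) (at_right 0)"
  proof (rule ccontr)
    assume "\<not> ?thesis"
    then obtain e where e: "0 < e" and not_ev: "\<not> (\<forall>\<^sub>F t in at_right 0. dist (f t) L0 < e)"
      unfolding tendsto_iff by blast
    have "\<exists>t. 0 < t \<and> t < s0 n \<and> \<not> dist (f t) L0 < e" for n
      using not_ev s0(1)[of n] unfolding eventually_at_right_field by force
    then obtain s where s: "\<And>n. 0 < s n" "\<And>n. s n < s0 n" "\<And>n. \<not> dist (f (s n)) L0 < e"
      by metis
    have "s \<longlonglongrightarrow> 0"
    proof (rule tendsto_sandwich[OF _ _ tendsto_const s0(2)])
      show "\<forall>\<^sub>F n in sequentially. 0 \<le> s n" using s(1) by (simp add: less_imp_le)
      show "\<forall>\<^sub>F n in sequentially. s n \<le> s0 n" using s(2) by (simp add: less_imp_le)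
    qed
    then obtain L r where L: "((\<lambda>n. f (s n)) \<circ> r) \<longlonglongrightarrow> L" and "P L"
      using convergent_subseq[of s, OF s(1) \<open>s \<longlonglongrightarrow> 0\<close>] by blast
    then have "L = L0" using L0 unique by blast
    moreover have "e \<le> dist L L0"
      using s(3) by (intro LIMSEQ_le_const[OF tendsto_dist[OF L tendsto_const]]) (auto simp: not_less)
    ultimately show False using e by simp
  qed
  then show ?thesis by (rule that)
qed

lemma orthogonal_projector_exists:
  fixes K :: "(real^'n) set"
  assumes K: "subspace K"
  obtains Q :: "real^'n^'n" where "Q \<in> symm" "\<And>v. Q *v v \<in> K" "\<And>u. u \<in> K \<Longrightarrow> Q *v u = u"
proof -
  obtain B where B: "B \<subseteq> K" "pairwise orthogonal B" "\<And>x. x \<in> B \<Longrightarrow> norm x = 1"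
    "independent B" "span B = K"
    using orthonormal_basis_subspace[OF K] by metis
  have fin: "finite B" using B(4) by (rule finiteI_independent)
  define Q where "Q = (\<Sum>b\<in>B. outer_prod b)"
  have Qv: "Q *v v = (\<Sum>b\<in>B. (b \<bullet> v) *\<^sub>R b)" for v
    by (simp add: Q_def sum_matrix_vector_mult[OF fin] outer_prod_mult_vec)
  have QK: "Q *v v \<in> K" for v
    unfolding Qv B(5)[symmetric] by (intro span_sum span_scale span_base)
  have "Q *v u = u" if "u \<in> K" for u
  proof -
    define w where "w = Q *v u - u"
    have "orthogonal w b" if b: "b \<in> B" for b
    proof -
      have "b \<bullet> (Q *v u) = (\<Sum>b'\<in>B. (b' \<bullet> u) * (b \<bullet> b'))"
        by (simp add: Qv inner_sum_right)
      also have "\<dots> = (b \<bullet> u) * (b \<bullet> b) + (\<Sum>b'\<in>B - {b}. (b' \<bullet> u) * (b \<bullet> b'))"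
        using fin b by (simp add: sum.remove)
      also have "(\<Sum>b'\<in>B - {b}. (b' \<bullet> u) * (b \<bullet> b')) = 0"
        using B(2) b by (intro sum.neutral) (auto simp: pairwise_def orthogonal_def)
      also have "b \<bullet> b = 1" using B(3)[OF b] by (simp add: norm_eq_1)
      finally show ?thesis by (simp add: w_def orthogonal_def inner_diff_right inner_commute)
    qed
    moreover have "w \<in> span B" unfolding w_def B(5) using QK that K by (simp add: subspace_diff)
    ultimately have "orthogonal w w" by (metis orthogonal_to_span)
    then show ?thesis by (simp add: w_def orthogonal_def)
  qed
  moreover have "Q \<in> symm" unfolding Q_def by (intro symm_sum outer_prod_symm)
  ultimately show ?thesis using that QK by blast
qed

lemma proj_plus_diff_quotient:
  fixes Z H :: "real^'n^'n"
  assumes Z: "Z \<in> symm" and H: "H \<in> symm" and t: "0 < t"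
  defines "D \<equiv> diff_quotient proj_plus Z H t"
  shows "D \<in> symm" "norm D \<le> norm H"
    "proj_plus Z ** (H - D) + D ** proj_minus Z + t *\<^sub>R (D ** (H - D)) = 0"
    "\<And>u. proj_plus Z *v u = 0 \<Longrightarrow> proj_minus Z *v u = 0
        \<Longrightarrow> 0 \<le> u \<bullet> (D *v u) \<and> u \<bullet> ((H - D) *v u) \<le> 0"
proof -
  define P N Zt where "P = proj_plus Z" and "N = proj_minus Z" and "Zt = Z + t *\<^sub>R H"
  have Zt: "Zt \<in> symm" using Z H by (simp add: Zt_def symm_add symm_scaleR)
  have Pt: "proj_plus Zt = P + t *\<^sub>R D"
    using diff_quotient_eq[of t proj_plus Z H] t by (simp add: D_def P_def Zt_def)
  have "proj_minus Zt = Zt - proj_plus Zt" by (rule proj_minus_eq[OF Zt])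
  also have "\<dots> = (Z - P) + t *\<^sub>R (H - D)" by (simp only: Pt) (simp add: Zt_def algebra_simps)
  also have "Z - P = N" using proj_minus_eq[OF Z] by (simp add: P_def N_def)
  finally have Nt: "proj_minus Zt = N + t *\<^sub>R (H - D)" .
  have "D = (1/t) *\<^sub>R (proj_plus Zt - P)" using t by (simp add: Pt)
  then show "D \<in> symm"
    by (simp add: P_def symm_scaleR symm_diff psd_cone_symm[OF proj_plus_psd])
  have "norm (t *\<^sub>R D) = norm (proj_plus Zt - proj_plus Z)" by (simp add: Pt P_def)
  also have "\<dots> \<le> 1 * norm (Zt - Z)" by (rule lipschitz_on_normD[OF lipschitz_proj_plus]) auto
  finally have "norm (t *\<^sub>R D) \<le> norm (t *\<^sub>R H)" by (simp add: Zt_def)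
  then show "norm D \<le> norm H" using t by simp
  have "t *\<^sub>R (P ** (H - D) + D ** N + t *\<^sub>R (D ** (H - D))) = P ** N + t *\<^sub>R (P ** (H - D) + D ** N + t *\<^sub>R (D ** (H - D)))"
    using proj_plus_mult_proj_minus[OF Z] by (simp add: P_def N_def)
  also have "\<dots> = proj_plus Zt ** proj_minus Zt"
    unfolding Pt Nt by (rule matrix_mult_expand[symmetric])
  also have "\<dots> = 0" by (rule proj_plus_mult_proj_minus[OF Zt])
  finally show "proj_plus Z ** (H - D) + D ** proj_minus Z + t *\<^sub>R (D ** (H - D)) = 0"
    using t by (simp add: P_def N_def)
  fix u assume Pu: "proj_plus Z *v u = 0" and Nu: "proj_minus Z *v u = 0"
  have "0 \<le> u \<bullet> (proj_plus Zt *v u)" by (rule psd_cone_quadratic[OF proj_plus_psd])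
  also have "u \<bullet> (proj_plus Zt *v u) = t * (u \<bullet> (D *v u))"
    using Pu by (simp add: Pt P_def matrix_vector_mult_add_rdistrib scaleR_matrix_vector_assoc[symmetric]
        inner_add_right)
  finally have "0 \<le> u \<bullet> (D *v u)" using t by (simp add: zero_le_mult_iff)
  moreover have "u \<bullet> (proj_minus Zt *v u) \<le> 0" by (rule nsd_cone_quadratic[OF proj_minus_nsd])
  moreover have "u \<bullet> (proj_minus Zt *v u) = t * (u \<bullet> ((H - D) *v u))"
    using Nu by (simp add: Nt N_def matrix_vector_mult_add_rdistrib scaleR_matrix_vector_assoc[symmetric]
        inner_add_right)
  ultimately show "0 \<le> u \<bullet> (D *v u) \<and> u \<bullet> ((H - D) *v u) \<le> 0"
    using t by (simp add: mult_le_0_iff)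
qed

text \<open>With \<open>P = \<Pi>\<^sub>+ Z\<close>, \<open>N = \<Pi>\<^sub>- Z\<close> and \<open>Q\<close> the orthogonal projector onto \<open>ker P \<inter> ker N\<close>,
  every cluster point \<open>D\<close> of the difference quotients of \<open>\<Pi>\<^sub>+\<close> at \<open>Z\<close> along \<open>H\<close> satisfies these
  conditions: the first-order part of \<open>\<Pi>\<^sub>+ \<Pi>\<^sub>- = 0\<close> along \<open>Z + t H\<close>, the semidefiniteness of
  \<open>\<Pi>\<^sub>\<plusminus>(Z + t H)\<close> on \<open>ker P \<inter> ker N\<close>, and the second-order part compressed by \<open>Q\<close>.\<close>

definition proj_deriv_cond ::
    "real^'n^'n \<Rightarrow> real^'n^'n \<Rightarrow> real^'n^'n \<Rightarrow> real^'n^'n \<Rightarrow> real^'n^'n \<Rightarrow> bool" where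
  "proj_deriv_cond P N Q H D \<longleftrightarrow> D \<in> symm \<and> P ** (H - D) + D ** N = 0
     \<and> (\<forall>u. P *v u = 0 \<longrightarrow> N *v u = 0 \<longrightarrow> 0 \<le> u \<bullet> (D *v u) \<and> u \<bullet> ((H - D) *v u) \<le> 0)
     \<and> Q ** (D ** (H - D)) ** Q = 0"

locale kernel_projector =
  fixes P N Q :: "real^'n^'n"
  assumes P_psd: "P \<in> psd_cone" and N_nsd: "N \<in> nsd_cone" and P_N: "P ** N = 0"
    and Q_symm: "Q \<in> symm"
    and P_Q: "\<And>v. P *v (Q *v v) = 0" and N_Q: "\<And>v. N *v (Q *v v) = 0"
    and Q_id: "\<And>u. P *v u = 0 \<Longrightarrow> N *v u = 0 \<Longrightarrow> Q *v u = u"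
begin

lemma P_symm: "P \<in> symm"
  using P_psd by (rule psd_cone_symm)

lemma N_symm: "N \<in> symm"
  using N_nsd by (rule nsd_cone_symm)

lemma mult_Q_eq_0: "P ** Q = 0" "Q ** P = 0" "N ** Q = 0" "Q ** N = 0"
proof -
  show PQ: "P ** Q = 0" by (rule iffD2[OF matrix_eq]) (simp add: matrix_vector_mul_assoc[symmetric] P_Q)
  show NQ: "N ** Q = 0" by (rule iffD2[OF matrix_eq]) (simp add: matrix_vector_mul_assoc[symmetric] N_Q)
  show "Q ** P = 0" by (rule mult_symm_eq_0_commute[OF P_symm Q_symm PQ])
  show "Q ** N = 0" by (rule mult_symm_eq_0_commute[OF N_symm Q_symm NQ])
qed

lemma Q_idem: "Q *v (Q *v v) = Q *v v"
  by (rule Q_id[OF P_Q N_Q])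

lemma Q_sandwich_eq_0:
  assumes "P ** G + D ** N + t *\<^sub>R (D ** G) = 0" "t \<noteq> 0"
  shows "Q ** (D ** G) ** Q = 0"
proof -
  have "t *\<^sub>R (D ** G) = (P ** G + D ** N + t *\<^sub>R (D ** G)) - (P ** G + D ** N)" by simp
  also have "\<dots> = - (P ** G + D ** N)" using assms(1) by simp
  finally have "Q ** (t *\<^sub>R (D ** G)) ** Q = Q ** (- (P ** G + D ** N)) ** Q" by simp
  then have "t *\<^sub>R (Q ** (D ** G) ** Q) = - (Q ** P ** G ** Q + Q ** D ** N ** Q)"
    by (simp add: matrix_mult.scaleR_left matrix_mult.scaleR_right matrix_mult.minus_left
        matrix_mult.minus_right matrix_mult.add_left matrix_mult.add_right matrix_mult.diff_left
        matrix_mult.diff_right matrix_mul_assoc)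
  moreover have "Q ** P ** G ** Q = 0" by (simp add: mult_Q_eq_0(2))
  moreover have "Q ** D ** N ** Q = 0" by (simp add: matrix_mul_assoc[symmetric] mult_Q_eq_0(3))
  ultimately show ?thesis using assms(2) by simp
qed

text \<open>\<open>\<real>\<^sup>n\<close> is the orthogonal sum of \<open>range P\<close>, \<open>range N\<close> and \<open>range Q\<close>.\<close>

lemma kernel_subset_range_N:
  assumes "P *v y = 0" "Q *v y = 0"
  shows "y \<in> range ((*v) N)"
proof -
  have "subspace (range ((*v) N))"
    by (rule linear_subspace_image[OF matrix_vector_mul_linear subspace_UNIV])
  then have span_eq: "span (range ((*v) N)) = range ((*v) N)" by simp
  obtain y1 r where y1: "y1 \<in> span (range ((*v) N))"
    and r: "\<And>w. w \<in> span (range ((*v) N)) \<Longrightarrow> orthogonal r w" and y: "y = y1 + r"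
    using orthogonal_subspace_decomp_exists[of "range ((*v) N)" y] by blast
  obtain z where z: "y1 = N *v z" using y1 span_eq by auto
  have "orthogonal r (N *v (N *v r))" by (rule r) (simp add: span_eq)
  then have "(N *v r) \<bullet> (N *v r) = 0"
    using symm_inner_mult[OF N_symm, of r "N *v r"] by (simp add: orthogonal_def)
  then have Nr: "N *v r = 0" by simp
  have "P *v y1 = 0" "Q *v y1 = 0"
    using P_N mult_Q_eq_0(4) by (simp_all add: z matrix_vector_mul_assoc)
  then have "P *v r = 0" "Q *v r = 0"
    using assms by (simp_all add: y matrix_vector_right_distrib)
  then have "r = 0" using Q_id[of r] Nr by simp
  then show ?thesis using y z by simp
qed

lemma proj_deriv_cond_semidefinite:
  assumes H: "H \<in> symm" and cond: "proj_deriv_cond P N Q H D"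
  shows "Q ** D ** Q \<in> psd_cone" "Q ** (H - D) ** Q \<in> nsd_cone"
proof -
  have D: "D \<in> symm"
    and sign: "\<And>u. P *v u = 0 \<Longrightarrow> N *v u = 0 \<Longrightarrow> 0 \<le> u \<bullet> (D *v u) \<and> u \<bullet> ((H - D) *v u) \<le> 0"
    using cond by (auto simp: proj_deriv_cond_def)
  have compress: "v \<bullet> ((Q ** A ** Q) *v v) = (Q *v v) \<bullet> (A *v (Q *v v))" for A v
    using symm_inner_mult[OF Q_symm, of v "A *v (Q *v v)"]
    by (simp add: matrix_vector_mul_assoc[symmetric] inner_commute)
  show "Q ** D ** Q \<in> psd_cone"
    using sign[OF P_Q N_Q] symm_mult_sandwich[OF Q_symm D] by (simp add: psd_cone_def compress)
  show "Q ** (H - D) ** Q \<in> nsd_cone"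
    using sign[OF P_Q N_Q] symm_mult_sandwich[OF Q_symm symm_diff[OF H D]]
    by (simp add: nsd_cone_def compress)
qed

lemma proj_deriv_cond_orthogonal:
  assumes H: "H \<in> symm" and cond: "proj_deriv_cond P N Q H D"
  shows "(Q ** D ** Q) ** (Q ** (H - D) ** Q) = 0"
proof -
  have D: "D \<in> symm" and first_order: "P ** (H - D) + D ** N = 0"
    and second_order: "Q ** (D ** (H - D)) ** Q = 0"
    using cond by (auto simp: proj_deriv_cond_def)
  have HD: "H - D \<in> symm" using H D by (rule symm_diff)
  have "(H - D) ** P + N ** D = transpose (P ** (H - D) + D ** N)"
    using P_symm N_symm D HD by (simp add: transpose_add transpose_mult_symm)
  then have "((H - D) ** P + N ** D) ** Q = 0" using first_order by (simp add: transpose_0)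
  then have "N ** D ** Q = 0"
    using mult_Q_eq_0(1) by (simp add: matrix_mult.add_left matrix_mul_assoc[symmetric])
  moreover have "Q ** D ** N = transpose (N ** D ** Q)"
    using N_symm D Q_symm by (simp add: matrix_transpose_mul symm_transpose matrix_mul_assoc)
  ultimately have QDN: "Q ** D ** N = 0" by (simp add: transpose_0)
  have "(P ** (H - D) + D ** N) ** Q = 0" using first_order by simp
  then have PHDQ: "P ** (H - D) ** Q = 0"
    using mult_Q_eq_0(3) by (simp add: matrix_mult.add_left matrix_mul_assoc[symmetric])
  show ?thesis
  proof (rule iffD2[OF matrix_eq], intro allI)
    fix w
    define x where "x = (H - D) *v (Q *v w)"
    have "P *v x = 0"
      using PHDQ by (simp add: x_def matrix_vector_mul_assoc matrix_mul_assoc)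
    then have "P *v (x - Q *v x) = 0" "Q *v (x - Q *v x) = 0"
      using P_Q Q_idem by (simp_all add: matrix_vector_mult_diff_distrib)
    then obtain z where "x - Q *v x = N *v z" using kernel_subset_range_N by blast
    then have "(Q ** D) *v (x - Q *v x) = 0" using QDN by (simp add: matrix_vector_mul_assoc)
    then have QDx: "Q *v (D *v (Q *v x)) = Q *v (D *v x)"
      by (simp add: matrix_vector_mul_assoc[symmetric] matrix_vector_mult_diff_distrib)
    have "((Q ** D ** Q) ** (Q ** (H - D) ** Q)) *v w = Q *v (D *v (Q *v (Q *v x)))"
      by (simp add: x_def matrix_vector_mul_assoc[symmetric])
    also have "\<dots> = Q *v (D *v x)" by (simp only: Q_idem QDx)
    also have "\<dots> = (Q ** (D ** (H - D)) ** Q) *v w"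
      by (simp add: x_def matrix_vector_mul_assoc[symmetric])
    finally show "((Q ** D ** Q) ** (Q ** (H - D) ** Q)) *v w = 0 *v w"
      by (simp add: second_order)
  qed
qed

text \<open>\<open>E = D\<^sub>1 - D\<^sub>2\<close> lives on \<open>ker P \<inter> ker N\<close>, where it is the difference both of the PSD parts
  \<open>Q D\<^sub>i Q\<close> and of the NSD parts \<open>Q (H - D\<^sub>i) Q\<close>; orthogonality of these parts gives \<open>tr(E\<^sup>2) \<le> 0\<close>.\<close>

lemma proj_deriv_cond_unique:
  assumes H: "H \<in> symm" and D1: "proj_deriv_cond P N Q H D1" and D2: "proj_deriv_cond P N Q H D2"
  shows "D1 = D2"
proof -
  define E where "E = D1 - D2"
  have E: "E \<in> symm" using D1 D2 by (simp add: E_def proj_deriv_cond_def symm_diff)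
  have "P ** E - E ** N = (P ** (H - D2) + D2 ** N) - (P ** (H - D1) + D1 ** N)"
    by (simp add: E_def matrix_mult.diff_left matrix_mult.diff_right matrix_mult.add_right algebra_simps)
  also have "\<dots> = 0" using D1 D2 by (simp add: proj_deriv_cond_def)
  finally have "P ** E = E ** N" by simp
  then have "E ** P = 0" "E ** N = 0" using psd_nsd_intertwiner_eq_0[OF P_psd N_nsd E] by auto
  then have PE: "P ** E = 0" and NE: "N ** E = 0"
    using E P_symm N_symm by (auto intro: mult_symm_eq_0_commute)
  have QE: "Q ** E = E"
  proof (rule iffD2[OF matrix_eq], intro allI)
    fix v
    have "P *v (E *v v) = 0" "N *v (E *v v) = 0" using PE NE by (simp_all add: matrix_vector_mul_assoc)
    then show "(Q ** E) *v v = E *v v" by (simp add: matrix_vector_mul_assoc[symmetric] Q_id)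
  qed
  then have "E ** Q = E"
    using transpose_mult_symm[OF Q_symm E] E by (simp add: symm_transpose)
  then have QEQ: "Q ** E ** Q = E" using QE by simp
  define a1 a2 b1 b2 where "a1 = Q ** D1 ** Q" and "a2 = Q ** D2 ** Q"
    and "b1 = Q ** (H - D1) ** Q" and "b2 = Q ** (H - D2) ** Q"
  have "E = a1 - a2" "E = b2 - b1"
    using QEQ by (simp_all add: a1_def a2_def b1_def b2_def E_def matrix_mult.diff_left matrix_mult.diff_right)
  then have "E ** E = (a1 - a2) ** (b2 - b1)" by (rule arg_cong2[where f = "(**)"])
  then have "trace (E ** E) = trace (a1 ** b2) + trace (a2 ** b1)"
    using proj_deriv_cond_orthogonal[OF H D1] proj_deriv_cond_orthogonal[OF H D2]
    by (simp add: a1_def a2_def b1_def b2_def matrix_mult.diff_left matrix_mult.diff_right trace_sub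
        trace_0[simplified])
  also have "\<dots> \<le> 0"
    using proj_deriv_cond_semidefinite[OF H D1] proj_deriv_cond_semidefinite[OF H D2]
      trace_mult_psd_nsd_nonpos[of a1 b2] trace_mult_psd_nsd_nonpos[of a2 b1]
    by (simp add: a1_def a2_def b1_def b2_def)
  finally have "E \<bullet> E \<le> 0" by (simp add: inner_eq_trace[OF E])
  then have "E \<bullet> E = 0" using inner_ge_zero[of E] by linarith
  then have "E = 0" by simp
  then show ?thesis by (simp add: E_def)
qed

end

lemma proj_deriv_cond_cluster_point:
  fixes Z H :: "real^'n^'n"
  assumes Z: "Z \<in> symm" and H: "H \<in> symm"
    and Q: "kernel_projector (proj_plus Z) (proj_minus Z) Q"
    and s: "\<And>n. 0 < s n" "s \<longlonglongrightarrow> 0"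
    and lim: "(\<lambda>n. diff_quotient proj_plus Z H (s n)) \<longlonglongrightarrow> D"
  shows "proj_deriv_cond (proj_plus Z) (proj_minus Z) Q H D"
proof -
  define P N where "P = proj_plus Z" and "N = proj_minus Z"
  interpret kernel_projector P N Q using Q by (simp add: P_def N_def)
  define f where "f n = diff_quotient proj_plus Z H (s n)" for n
  have f: "f \<longlonglongrightarrow> D" using lim by (simp add: f_def[abs_def])
  note quotient = proj_plus_diff_quotient[OF Z H s(1), folded P_def N_def f_def]
  have "D \<in> symm"
    using quotient(1) by (intro closed_sequentially[OF closed_symm _ f]) simp
  have "(\<lambda>n. P ** (H - f n) + f n ** N + s n *\<^sub>R (f n ** (H - f n)))
      \<longlonglongrightarrow> P ** (H - D) + D ** N + 0 *\<^sub>R (D ** (H - D))"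
    by (intro tendsto_add tendsto_scaleR matrix_mult.tendsto tendsto_diff tendsto_const f s(2))
  then have "(\<lambda>n. 0) \<longlonglongrightarrow> P ** (H - D) + D ** N" using quotient(3) by simp
  then have first_order: "P ** (H - D) + D ** N = 0" by (rule LIMSEQ_unique[OF _ tendsto_const])
  have quadratic: "(\<lambda>n. u \<bullet> (A n *v u)) \<longlonglongrightarrow> u \<bullet> (B *v u)" if "A \<longlonglongrightarrow> B" for A :: "nat \<Rightarrow> real^'n^'n" and B u
    using tendsto_inner[OF that tendsto_const[of "outer_prod u"]] by (simp add: inner_outer_prod)
  have sign: "0 \<le> u \<bullet> (D *v u) \<and> u \<bullet> ((H - D) *v u) \<le> 0" if "P *v u = 0" "N *v u = 0" for u
  proof
    show "0 \<le> u \<bullet> (D *v u)"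
      using quotient(4)[OF that] by (intro LIMSEQ_le_const[OF quadratic[OF f]]) auto
    show "u \<bullet> ((H - D) *v u) \<le> 0"
      using quotient(4)[OF that]
      by (intro LIMSEQ_le_const2[OF quadratic[OF tendsto_diff[OF tendsto_const f]]]) auto
  qed
  have "(\<lambda>n. Q ** (f n ** (H - f n)) ** Q) \<longlonglongrightarrow> Q ** (D ** (H - D)) ** Q"
    by (intro matrix_mult.tendsto tendsto_diff tendsto_const f)
  moreover have "Q ** (f n ** (H - f n)) ** Q = 0" for n
    using quotient(3) s(1)[of n] by (intro Q_sandwich_eq_0) auto
  ultimately have "(\<lambda>n. 0) \<longlonglongrightarrow> Q ** (D ** (H - D)) ** Q" by simp
  then have "Q ** (D ** (H - D)) ** Q = 0" by (rule LIMSEQ_unique[OF _ tendsto_const])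
  then show ?thesis
    using \<open>D \<in> symm\<close> first_order sign by (simp add: proj_deriv_cond_def P_def N_def)
qed

lemma proj_plus_has_dir_deriv:
  fixes Z H :: "real^'n^'n"
  assumes Z: "Z \<in> symm" and H: "H \<in> symm"
  obtains D where "D \<in> symm" "has_dir_deriv proj_plus Z H D"
proof -
  let ?K = "{u. proj_plus Z *v u = 0 \<and> proj_minus Z *v u = 0}"
  have "subspace ?K" by (auto simp: subspace_def matrix_vector_right_distrib matrix_vector_mult_scaleR)
  then obtain Q where "Q \<in> symm" "\<And>v. Q *v v \<in> ?K" "\<And>u. u \<in> ?K \<Longrightarrow> Q *v u = u"
    using orthogonal_projector_exists by blast
  then have Q: "kernel_projector (proj_plus Z) (proj_minus Z) Q"
    by unfold_locales (auto simp: proj_plus_psd proj_minus_nsd proj_plus_mult_proj_minus[OF Z])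
  have bounded: "bounded (diff_quotient proj_plus Z H ` {0<..})"
    by (rule boundedI[of _ "norm H"]) (auto intro: proj_plus_diff_quotient(2)[OF Z H])
  obtain D where D: "(diff_quotient proj_plus Z H \<longlongrightarrow> D) (at_right 0)"
    using tendsto_at_right_0_unique_cluster[OF bounded proj_deriv_cond_cluster_point[OF Z H Q]
        kernel_projector.proj_deriv_cond_unique[OF Q H]] .
  have "D \<in> symm"
  proof (rule Lim_in_closed_set[OF closed_symm _ _ D])
    show "\<forall>\<^sub>F t in at_right 0. diff_quotient proj_plus Z H t \<in> symm"
      using eventually_at_right_less[of 0] by (rule eventually_mono) (rule proj_plus_diff_quotient(1)[OF Z H])
  qed simp
  with D show ?thesis using that by (simp add: has_dir_deriv_def)
qed

lemma proj_minus_has_dir_deriv: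
  assumes Z: "Z \<in> symm" and H: "H \<in> symm" and D: "has_dir_deriv proj_plus Z H D"
  shows "has_dir_deriv proj_minus Z H (H - D)"
proof -
  have "diff_quotient proj_minus Z H t = H - diff_quotient proj_plus Z H t" if "0 < t" for t
    using that Z H by (simp add: diff_quotient_def proj_minus_eq symm_add symm_scaleR algebra_simps)
  then have "\<forall>\<^sub>F t in at_right 0. H - diff_quotient proj_plus Z H t = diff_quotient proj_minus Z H t"
    using eventually_at_right_less[of 0] by (auto elim: eventually_mono)
  moreover have "((\<lambda>t. H - diff_quotient proj_plus Z H t) \<longlongrightarrow> H - D) (at_right 0)"
    using D unfolding has_dir_deriv_def by (intro tendsto_diff tendsto_const)
  ultimately show ?thesis unfolding has_dir_deriv_def by (simp add: tendsto_cong)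
qed

section \<open>The projection \<open>\<P>\<close> and the KKT solution sets\<close>

lemma sinner_commute: "sinner A B = sinner B (A::real^'n^'n)"
  unfolding sinner_def by (rule trace_mul_sym)

lemma linear_sinner: "linear (sinner (A::real^'n^'n))"
  unfolding linear_iff sinner_def
  by (simp add: matrix_mult.add_right matrix_mult.scaleR_right trace_add trace_scaleR)

lemma linear_Aop: "linear (Aop As)"
  unfolding linear_iff Aop_def
  by (simp add: vec_eq_iff linear_add[OF linear_sinner] linear_scale[OF linear_sinner])

lemma linear_Aadj: "linear (Aadj As)"
  unfolding linear_iff Aadj_def by (simp add: scaleR_add_left sum.distrib scaleR_sum_right)

lemma linear_Pop: "linear (Pop As)"
proof -
  have "Pop As = Aadj As \<circ> (\<lambda>y. matrix_inv (AAadj As) *v y) \<circ> Aop As"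
    by (simp add: fun_eq_iff Pop_def)
  then show ?thesis by (simp add: linear_compose linear_Aop linear_Aadj)
qed

lemma Aop_inner: "Aop As X \<bullet> y = sinner (Aadj As y) X"
proof -
  have "sinner (Aadj As y) X = sinner X (Aadj As y)" by (rule sinner_commute)
  also have "\<dots> = (\<Sum>i\<in>UNIV. y $ i * sinner X (As i))"
    unfolding Aadj_def by (simp add: linear_sum[OF linear_sinner] linear_scale[OF linear_sinner])
  also have "\<dots> = Aop As X \<bullet> y"
    unfolding Aop_def inner_vec_def by (simp add: sinner_commute[of X] mult.commute)
  finally show ?thesis by simp
qed

lemma Aop_Aadj: "Aop As (Aadj As y) = AAadj As *v y"
  unfolding Aop_def Aadj_def AAadj_def matrix_vector_mult_def
  by (simp add: vec_eq_iff linear_sum[OF linear_sinner] linear_scale[OF linear_sinner] mult.commute)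

lemma Aadj_symm: "(\<And>i. As i \<in> symm) \<Longrightarrow> Aadj As y \<in> symm"
  unfolding Aadj_def by (intro symm_sum symm_scaleR)

lemma AAadj_invertible:
  assumes A_sym: "\<And>i. As i \<in> symm" and A1: "\<forall>w. \<exists>X\<in>symm. Aop As X = w"
  shows "invertible (AAadj As)"
proof -
  have "y = 0" if y: "AAadj As *v y = 0" for y
  proof -
    have "Aadj As y \<bullet> Aadj As y = sinner (Aadj As y) (Aadj As y)"
      by (simp add: sinner_def inner_eq_trace[OF Aadj_symm[OF A_sym]])
    also have "\<dots> = Aop As (Aadj As y) \<bullet> y" by (rule Aop_inner[symmetric])
    also have "\<dots> = 0" using y by (simp add: Aop_Aadj)
    finally have Ay: "Aadj As y = 0" by simp
    obtain X where "Aop As X = y" using A1 by blast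
    then have "y \<bullet> y = sinner (Aadj As y) X" using Aop_inner by metis
    then show "y = 0" using Ay by (simp add: sinner_def trace_0[simplified])
  qed
  then show ?thesis by (simp add: invertible_left_inverse matrix_left_invertible_ker)
qed

lemma matrix_inv_right: "invertible (A::real^'n^'n) \<Longrightarrow> A ** matrix_inv A = mat 1"
  unfolding invertible_def matrix_inv_def by (rule someI2_ex) auto

lemma Pop_idem:
  assumes "\<And>i. As i \<in> symm" "\<forall>w. \<exists>X\<in>symm. Aop As X = w"
  shows "Pop As (Pop As X) = Pop As X"
proof -
  have "Aop As (Pop As X) = Aop As X"
    using matrix_inv_right[OF AAadj_invertible[OF assms]]
    by (simp add: Pop_def Aop_Aadj matrix_vector_mul_assoc)
  then show ?thesis by (simp add: Pop_def)
qed

lemma Pop_add_Pperp_eq_0: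
  assumes "\<And>i. As i \<in> symm" "\<forall>w. \<exists>X\<in>symm. Aop As X = w" and "Pop As X + Pperp As Y = 0"
  shows "Pop As X = 0" "Pperp As Y = 0"
proof -
  have "Pop As X = Pop As (Pop As X + Pperp As Y)"
    by (simp add: Pperp_def linear_add[OF linear_Pop] linear_diff[OF linear_Pop] Pop_idem[OF assms(1,2)])
  also have "\<dots> = 0" by (simp add: assms(3) linear_0[OF linear_Pop])
  finally show "Pop As X = 0" .
  then show "Pperp As Y = 0" using assms(3) by simp
qed

lemma Pperp_scaleR: "Pperp As (c *\<^sub>R X) = c *\<^sub>R Pperp As X"
  by (simp add: Pperp_def linear_scale[OF linear_Pop] scaleR_diff_right)

lemma Xstar_psd: "X \<in> Xstar As b C \<Longrightarrow> X \<in> psd_cone"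
  by (auto simp: Xstar_def KKT_def)

lemma Sstar_psd: "S \<in> Sstar As b C \<Longrightarrow> S \<in> psd_cone"
  by (auto simp: Sstar_def KKT_def)

text \<open>Primal and dual solutions of different KKT points are complementary, since \<open>X - X'\<close> lies
  in \<open>ker \<A>\<close> and \<open>S - S'\<close> in \<open>range \<A>\<^sup>*\<close>.\<close>

lemma trace_Xstar_Sstar:
  assumes X: "X \<in> Xstar As b C" and S: "S \<in> Sstar As b C"
  shows "trace (X ** S) = 0"
proof -
  obtain y1 S1 where K1: "KKT As b C X y1 S1" using X by (auto simp: Xstar_def)
  obtain X2 y2 where K2: "KKT As b C X2 y2 S" using S by (auto simp: Sstar_def)
  have "S1 - S = Aadj As (y2 - y1)"
    using K1 K2 by (simp add: KKT_def linear_diff[OF linear_Aadj] algebra_simps)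
  then have "trace ((S1 - S) ** (X - X2)) = Aop As (X - X2) \<bullet> (y2 - y1)"
    by (simp add: Aop_inner sinner_def)
  also have "\<dots> = 0" using K1 K2 by (simp add: KKT_def linear_diff[OF linear_Aop])
  finally have "trace (S1 ** X) - trace (S1 ** X2) - trace (S ** X) + trace (S ** X2) = 0"
    by (simp add: matrix_mult.diff_left matrix_mult.diff_right trace_sub)
  moreover have "trace (S1 ** X) = 0" "trace (S ** X2) = 0"
    using K1 K2 trace_mul_sym[of S1 X] trace_mul_sym[of S X2] by (simp_all add: KKT_def sinner_def)
  moreover have "0 \<le> trace (S1 ** X2)" "0 \<le> trace (S ** X)"
    using K1 K2 by (auto simp: KKT_def intro: trace_mult_psd_cone_nonneg)
  ultimately have "trace (S ** X) = 0" by linarith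
  then show ?thesis by (simp add: trace_mul_sym[of X S])
qed

lemma convex_Xstar: "convex (Xstar As b C :: (real^'n^'n) set)"
proof (rule convexI)
  fix X1 X2 :: "real^'n^'n" and u v :: real
  assume X1: "X1 \<in> Xstar As b C" and X2: "X2 \<in> Xstar As b C" and uv: "0 \<le> u" "0 \<le> v" "u + v = 1"
  obtain y S where K: "KKT As b C X1 y S" using X1 by (auto simp: Xstar_def)
  have X2S: "sinner X2 S = 0"
    using trace_Xstar_Sstar[OF X2, of S] K by (auto simp: sinner_def Sstar_def)
  have "Aop As X2 = b" using X2 by (auto simp: Xstar_def KKT_def)
  then have "Aop As (u *\<^sub>R X1 + v *\<^sub>R X2) = (u + v) *\<^sub>R b"
    using K by (simp add: KKT_def linear_add[OF linear_Aop] linear_scale[OF linear_Aop] scaleR_add_left)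
  moreover have "sinner (u *\<^sub>R X1 + v *\<^sub>R X2) S = 0"
    using K X2S by (simp add: KKT_def sinner_commute[of _ S] linear_add[OF linear_sinner]
        linear_scale[OF linear_sinner])
  ultimately have "KKT As b C (u *\<^sub>R X1 + v *\<^sub>R X2) y S"
    using K Xstar_psd[OF X2] psd_cone_symm[OF Xstar_psd[OF X2]] uv
    by (auto simp: KKT_def symm_add symm_scaleR psd_cone_add psd_cone_scaleR)
  then show "u *\<^sub>R X1 + v *\<^sub>R X2 \<in> Xstar As b C" by (auto simp: Xstar_def)
qed

lemma convex_Sstar: "convex (Sstar As b C :: (real^'n^'n) set)"
proof (rule convexI)
  fix S1 S2 :: "real^'n^'n" and u v :: real
  assume S1: "S1 \<in> Sstar As b C" and S2: "S2 \<in> Sstar As b C" and uv: "0 \<le> u" "0 \<le> v" "u + v = 1"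
  obtain X y1 where K1: "KKT As b C X y1 S1" using S1 by (auto simp: Sstar_def)
  obtain X2 y2 where K2: "KKT As b C X2 y2 S2" using S2 by (auto simp: Sstar_def)
  have XS2: "sinner X S2 = 0"
    using trace_Xstar_Sstar[OF _ S2, of X] K1 by (auto simp: sinner_def Xstar_def)
  have "Aadj As (u *\<^sub>R y1 + v *\<^sub>R y2) + (u *\<^sub>R S1 + v *\<^sub>R S2)
      = u *\<^sub>R (Aadj As y1 + S1) + v *\<^sub>R (Aadj As y2 + S2)"
    by (simp add: linear_add[OF linear_Aadj] linear_scale[OF linear_Aadj] algebra_simps)
  also have "\<dots> = C" using K1 K2 uv by (simp add: KKT_def scaleR_add_left[symmetric])
  finally have "Aadj As (u *\<^sub>R y1 + v *\<^sub>R y2) + (u *\<^sub>R S1 + v *\<^sub>R S2) = C" .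
  moreover have "sinner X (u *\<^sub>R S1 + v *\<^sub>R S2) = 0"
    using K1 XS2 by (simp add: KKT_def linear_add[OF linear_sinner] linear_scale[OF linear_sinner])
  ultimately have "KKT As b C X (u *\<^sub>R y1 + v *\<^sub>R y2) (u *\<^sub>R S1 + v *\<^sub>R S2)"
    using K1 K2 uv by (auto simp: KKT_def symm_add symm_scaleR psd_cone_add psd_cone_scaleR)
  then show "u *\<^sub>R S1 + v *\<^sub>R S2 \<in> Sstar As b C" by (auto simp: Sstar_def)
qed

lemma convex_Zstar: "convex (Zstar As b C \<tau> :: (real^'n^'n) set)"
proof (rule convexI)
  fix Z1 Z2 :: "real^'n^'n" and u v :: real
  assume "Z1 \<in> Zstar As b C \<tau>" "Z2 \<in> Zstar As b C \<tau>" and uv: "0 \<le> u" "0 \<le> v" "u + v = 1"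
  then obtain X1 S1 X2 S2 where X: "X1 \<in> Xstar As b C" "X2 \<in> Xstar As b C"
    and S: "S1 \<in> Sstar As b C" "S2 \<in> Sstar As b C" and Z: "Z1 = X1 - \<tau> *\<^sub>R S1" "Z2 = X2 - \<tau> *\<^sub>R S2"
    by (auto simp: Zstar_def)
  have "u *\<^sub>R Z1 + v *\<^sub>R Z2 = (u *\<^sub>R X1 + v *\<^sub>R X2) - \<tau> *\<^sub>R (u *\<^sub>R S1 + v *\<^sub>R S2)"
    by (simp add: Z algebra_simps)
  moreover have "u *\<^sub>R X1 + v *\<^sub>R X2 \<in> Xstar As b C" "u *\<^sub>R S1 + v *\<^sub>R S2 \<in> Sstar As b C"
    using convexD[OF convex_Xstar X uv] convexD[OF convex_Sstar S uv] .
  ultimately show "u *\<^sub>R Z1 + v *\<^sub>R Z2 \<in> Zstar As b C \<tau>" by (auto simp: Zstar_def)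
qed

lemma proj_Zstar:
  assumes "X \<in> Xstar As b C" "S \<in> Sstar As b C" "0 \<le> \<tau>"
  shows "proj_plus (X - \<tau> *\<^sub>R S) = X" "proj_minus (X - \<tau> *\<^sub>R S) = - \<tau> *\<^sub>R S"
  using proj_diff_scaleR[OF Xstar_psd Sstar_psd trace_Xstar_Sstar, OF assms(1,2,1,2,3)] by simp_all

section \<open>Rescaling the negative part\<close>

definition scale_neg_part :: "real \<Rightarrow> real^'n^'n \<Rightarrow> real^'n^'n" where
  "scale_neg_part r M = proj_plus M + r *\<^sub>R proj_minus M"

lemma proj_scale_neg_part:
  assumes "M \<in> symm" "0 \<le> r"
  shows "proj_plus (scale_neg_part r M) = proj_plus M"
    "proj_minus (scale_neg_part r M) = r *\<^sub>R proj_minus M"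
proof -
  have "trace (proj_plus M ** (r *\<^sub>R proj_minus M)) = 0"
    using moreau_decomposition(2)[OF assms(1)] by (simp add: matrix_mult.scaleR_right trace_scaleR)
  from proj_eqI[OF proj_plus_psd nsd_cone_scaleR[OF proj_minus_nsd assms(2)] this]
  show "proj_plus (scale_neg_part r M) = proj_plus M"
    "proj_minus (scale_neg_part r M) = r *\<^sub>R proj_minus M"
    by (simp_all add: scale_neg_part_def)
qed

lemma lipschitz_scale_neg_part: "0 \<le> r \<Longrightarrow> (1 + r)-lipschitz_on UNIV (scale_neg_part r)"
  using lipschitz_on_add[OF lipschitz_proj_plus lipschitz_on_cmult_nonneg[OF lipschitz_proj_minus]]
  by (simp add: scale_neg_part_def[abs_def])

lemma scale_neg_part_Zstar:
  assumes "X \<in> Xstar As b C" "S \<in> Sstar As b C" "0 \<le> \<tau>" "0 \<le> r"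
  shows "scale_neg_part r (X - \<tau> *\<^sub>R S) = X - (r * \<tau>) *\<^sub>R S"
  using proj_Zstar[OF assms(1-3)] by (simp add: scale_neg_part_def)

lemma scale_neg_part_Zstar_subset:
  assumes "0 < \<sigma>" "0 < \<sigma>'"
  shows "scale_neg_part (\<sigma>' / \<sigma>) ` Zstar As b C \<sigma> \<subseteq> Zstar As b C \<sigma>'"
  using assms by (auto simp: Zstar_def scale_neg_part_Zstar) blast

lemma has_dir_deriv_scale_neg_part:
  assumes Z: "Z \<in> symm" and H: "H \<in> symm" and r: "0 \<le> r" and D: "has_dir_deriv proj_plus Z H D"
  shows "has_dir_deriv (scale_neg_part r) Z H (D + r *\<^sub>R (H - D))"
    "has_dir_deriv proj_plus (scale_neg_part r Z) (D + r *\<^sub>R (H - D)) D"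
    "has_dir_deriv proj_minus (scale_neg_part r Z) (D + r *\<^sub>R (H - D)) (r *\<^sub>R (H - D))"
proof -
  have Dm: "has_dir_deriv proj_minus Z H (H - D)" by (rule proj_minus_has_dir_deriv[OF Z H D])
  show F: "has_dir_deriv (scale_neg_part r) Z H (D + r *\<^sub>R (H - D))"
    unfolding scale_neg_part_def[abs_def] by (intro has_dir_deriv_add has_dir_deriv_scaleR D Dm)
  have line: "Z + t *\<^sub>R H \<in> symm" for t using Z H by (simp add: symm_add symm_scaleR)
  have "has_dir_deriv (\<lambda>x. proj_plus (scale_neg_part r x)) Z H D"
    using D by (subst has_dir_deriv_cong[where G = proj_plus and Z' = Z and H' = H])
      (simp_all add: diff_quotient_def proj_scale_neg_part[OF line r] proj_scale_neg_part[OF Z r])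
  then show "has_dir_deriv proj_plus (scale_neg_part r Z) (D + r *\<^sub>R (H - D)) D"
    by (rule has_dir_deriv_lipschitz_compose[OF lipschitz_proj_plus F])
  have "has_dir_deriv (\<lambda>x. proj_minus (scale_neg_part r x)) Z H (r *\<^sub>R (H - D))"
    using has_dir_deriv_scaleR[OF Dm, of r]
    by (subst has_dir_deriv_cong[where G = "\<lambda>x. r *\<^sub>R proj_minus x" and Z' = Z and H' = H])
      (simp_all add: diff_quotient_def proj_scale_neg_part[OF line r] proj_scale_neg_part[OF Z r])
  then show "has_dir_deriv proj_minus (scale_neg_part r Z) (D + r *\<^sub>R (H - D)) (r *\<^sub>R (H - D))"
    by (rule has_dir_deriv_lipschitz_compose[OF lipschitz_proj_minus F])
qed

lemma Zstar_symm:
  assumes "Z \<in> Zstar As b C \<tau>"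
  shows "Z \<in> symm"
proof -
  obtain X S where "X \<in> Xstar As b C" "S \<in> Sstar As b C" "Z = X - \<tau> *\<^sub>R S"
    using assms by (auto simp: Zstar_def)
  then show ?thesis by (simp add: symm_diff symm_scaleR psd_cone_symm Xstar_psd Sstar_psd)
qed

lemma scale_neg_part_inverse:
  assumes "Z \<in> Zstar As b C \<tau>" "0 \<le> \<tau>" "0 < r"
  shows "scale_neg_part (1/r) (scale_neg_part r Z) = Z"
  using assms by (auto simp: Zstar_def scale_neg_part_Zstar)

lemma crit_cone_scale_neg_part:
  assumes A_sym: "\<And>i. As i \<in> symm" and A1: "\<forall>w. \<exists>X\<in>symm. Aop As X = w"
    and Z: "Z \<in> symm" and H: "H \<in> crit_cone As Z" and r: "0 \<le> r"
  shows "dir_deriv proj_plus Z H + r *\<^sub>R dir_deriv proj_minus Z H \<in> crit_cone As (scale_neg_part r Z)"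
proof -
  have Hs: "H \<in> symm" and crit: "delta' As Z H = 0" using H by (auto simp: crit_cone_def)
  obtain D where Ds: "D \<in> symm" and D: "has_dir_deriv proj_plus Z H D"
    using proj_plus_has_dir_deriv[OF Z Hs] .
  note Dm = proj_minus_has_dir_deriv[OF Z Hs D]
  note D' = has_dir_deriv_scale_neg_part[OF Z Hs r D]
  have "Pop As D + Pperp As (H - D) = - delta' As Z H"
    by (simp add: delta'_def dir_deriv_eqI[OF D] dir_deriv_eqI[OF Dm])
  then have "Pop As D = 0" "Pperp As (H - D) = 0"
    using Pop_add_Pperp_eq_0[OF A_sym A1] crit by simp_all
  moreover have "D + r *\<^sub>R (H - D) \<in> symm" using Ds Hs by (simp add: symm_add symm_scaleR symm_diff)
  ultimately show ?thesis
    by (simp add: crit_cone_def delta'_def dir_deriv_eqI[OF D] dir_deriv_eqI[OF Dm]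
        dir_deriv_eqI[OF D'(2)] dir_deriv_eqI[OF D'(3)] Pperp_scaleR)
qed

lemma tangent_cone_scale_neg_part:
  assumes \<sigma>: "0 < \<sigma>" "0 < \<sigma>'" and Z: "Z \<in> Zstar As b C \<sigma>" and H: "H \<in> symm"
    and tangent: "dir_deriv proj_plus Z H + (\<sigma>'/\<sigma>) *\<^sub>R dir_deriv proj_minus Z H
      \<in> tangent_cone (Zstar As b C \<sigma>') (scale_neg_part (\<sigma>'/\<sigma>) Z)"
  shows "H \<in> tangent_cone (Zstar As b C \<sigma>) Z"
proof -
  define r where "r = \<sigma>'/\<sigma>"
  have r: "0 < r" using \<sigma> by (simp add: r_def)
  have Zs: "Z \<in> symm" using Z by (rule Zstar_symm)
  obtain D where D: "has_dir_deriv proj_plus Z H D"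
    using proj_plus_has_dir_deriv[OF Zs H] by blast
  note Dm = proj_minus_has_dir_deriv[OF Zs H D]
  note D' = has_dir_deriv_scale_neg_part[OF Zs H less_imp_le[OF r] D]
  have deriv: "has_dir_deriv (scale_neg_part (1/r)) (scale_neg_part r Z) (D + r *\<^sub>R (H - D)) H"
    using has_dir_deriv_add[OF D'(2) has_dir_deriv_scaleR[OF D'(3), of "1/r"]] r
    by (simp add: scale_neg_part_def[abs_def])
  have tangent': "D + r *\<^sub>R (H - D) \<in> tangent_cone (Zstar As b C \<sigma>') (scale_neg_part r Z)"
    using tangent by (simp add: dir_deriv_eqI[OF D] dir_deriv_eqI[OF Dm] r_def)
  have "scale_neg_part r Z \<in> Zstar As b C \<sigma>'"
    using scale_neg_part_Zstar_subset[OF \<sigma>, of As b C] Z by (auto simp: r_def)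
  moreover have "scale_neg_part (1/r) ` Zstar As b C \<sigma>' \<subseteq> Zstar As b C \<sigma>"
    using scale_neg_part_Zstar_subset[OF \<sigma>(2,1)] by (simp add: r_def)
  ultimately have "H \<in> tangent_cone (Zstar As b C \<sigma>) (scale_neg_part (1/r) (scale_neg_part r Z))"
    by (intro tangent_cone_image[OF convex_Zstar _ _ lipschitz_scale_neg_part deriv tangent'])
      (use r in simp_all)
  then show ?thesis using scale_neg_part_inverse[OF Z _ r] \<sigma> by simp
qed

theorem lemma9p2:
  fixes As :: "'m::finite \<Rightarrow> real^'n^'n" and b :: "real^'m" and C :: "real^'n^'n"
    and \<sigma> \<sigma>' :: real and Zb Hb :: "real^'n^'n"
  assumes C_sym: "C \<in> symm"
    and A_sym: "\<And>i. As i \<in> symm"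
    and A1: "\<forall>w. \<exists>X\<in>symm. Aop As X = w"
    and A2: "\<exists>X y S. KKT As b C X y S \<and> rank X + rank S = CARD('n)"
    and sig: "\<sigma> > 0" and sig': "\<sigma>' > 0"
    and Zb: "Zb \<in> Zstar As b C \<sigma>"
    and Hb: "Hb \<in> crit_cone As Zb - tangent_cone (Zstar As b C \<sigma>) Zb"
  shows "(let Xb = proj_plus Zb; Sb = - (1/\<sigma>) *\<^sub>R proj_minus Zb;
              Zb' = Xb - \<sigma>' *\<^sub>R Sb;
              Hb' = dir_deriv proj_plus Zb Hb + (\<sigma>'/\<sigma>) *\<^sub>R dir_deriv proj_minus Zb Hb
          in Hb' \<in> crit_cone As Zb' - tangent_cone (Zstar As b C \<sigma>') Zb')"
proof -
  have Zs: "Zb \<in> symm" using Zb by (rule Zstar_symm)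
  have Hs: "Hb \<in> symm" and crit: "Hb \<in> crit_cone As Zb"
    and not_tangent: "Hb \<notin> tangent_cone (Zstar As b C \<sigma>) Zb"
    using Hb by (auto simp: crit_cone_def)
  have Zb': "proj_plus Zb - \<sigma>' *\<^sub>R (- (1/\<sigma>) *\<^sub>R proj_minus Zb) = scale_neg_part (\<sigma>'/\<sigma>) Zb"
    by (simp add: scale_neg_part_def)
  have "dir_deriv proj_plus Zb Hb + (\<sigma>'/\<sigma>) *\<^sub>R dir_deriv proj_minus Zb Hb
      \<in> crit_cone As (scale_neg_part (\<sigma>'/\<sigma>) Zb)"
    using crit_cone_scale_neg_part[OF A_sym A1 Zs crit] sig sig' by simp
  moreover have "dir_deriv proj_plus Zb Hb + (\<sigma>'/\<sigma>) *\<^sub>R dir_deriv proj_minus Zb Hb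
      \<notin> tangent_cone (Zstar As b C \<sigma>') (scale_neg_part (\<sigma>'/\<sigma>) Zb)"
    using tangent_cone_scale_neg_part[OF sig sig' Zb Hs] not_tangent by blast
  ultimately show ?thesis unfolding Let_def Zb' by blast
qed

end
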